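(* If $X$ is a minimally $4$-rigid $3$-dimensional normal pseudomanifold, then $X$ is a stacked $3$-sphere.
   Context: A simplicial complex is a finite set of finite sets closed under taking subsets; an element of size $i+1$ is an $i$-face (the empty set is the unique $(-1)$-face); 1-faces are edges; $V(X)$ is the vertex set. A pure $d$-dimensional complex has all maximal faces (facets) of dimension $d$. The link of a face $\alpha$ is $\mathrm{lk}_X(\alpha)=\{\beta\in X:\beta\cap\alpha=\emptyset,\ \alpha\cup\beta\in X\}$. A $d$-dimensional normal pseudomanifold ($d\ge1$) is a pure $d$-dimensional simplicial complex in which every $(d-1)$-face lies in exactly two facets and the link of every face of dimension $\le d-2$ (including the empty face) is connected. For a positive integer $q$, a $d$-dimensional simplicial complex $X$ is $q$-rigid if $X$ is connected and for every $A\subseteq V(X)$ disjoint from at least one $d$-face of $X$, the number of edges of $X$ meeting $A$ is at least $q\cdot\#(A)$. An $n$-vertex $d$-dimensional complex is minimally $q$-rigid if it is $q$-rigid and has exactly $(n-d-1)q+\binom{d+1}{2}$ edges. The standard $d$-sphere $S^d_{d+2}$ is the complex of all proper subsets of a $(d+2)$-set. Starring a new vertex $v$ in a facet $\sigma$ of a pure $d$-dimensional complex replaces $\sigma$ by the facets $\tau\cup\{v\}$, $\tau$ a $(d-1)$-face of $\sigma$. A stacked $d$-sphere is a complex obtained from $S^d_{d+2}$ by finitely many such starrings. *)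

theory Defs
  imports Main
begin

text \<open>Simplicial complexes as finite sets of finite sets closed under subsets.
  A face \<sigma> has dimension card \<sigma> - 1, so an i-face has card i+1.\<close>

definition simplicial_complex :: "'a set set \<Rightarrow> bool" where
  "simplicial_complex X \<longleftrightarrow> finite X \<and> (\<forall>\<sigma>\<in>X. finite \<sigma>) \<and> (\<forall>\<sigma>\<in>X. \<forall>\<tau>. \<tau> \<subseteq> \<sigma> \<longrightarrow> \<tau> \<in> X)"

definition vertices :: "'a set set \<Rightarrow> 'a set" where
  "vertices X = \<Union>X"

definition edges :: "'a set set \<Rightarrow> 'a set set" where
  "edges X = {e \<in> X. card e = 2}"

definition link :: "'a set set \<Rightarrow> 'a set \<Rightarrow> 'a set set" where
  "link X \<alpha> = {\<beta> \<in> X. \<beta> \<inter> \<alpha> = {} \<and> \<alpha> \<union> \<beta> \<in> X}"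

definition connected_complex :: "'a set set \<Rightarrow> bool" where
  "connected_complex X \<longleftrightarrow>
     (\<forall>u\<in>vertices X. \<forall>v\<in>vertices X. (u, v) \<in> {(x, y). {x, y} \<in> edges X}\<^sup>*)"

definition facets :: "'a set set \<Rightarrow> 'a set set" where
  "facets X = {\<sigma> \<in> X. \<forall>\<tau>\<in>X. \<sigma> \<subseteq> \<tau> \<longrightarrow> \<tau> = \<sigma>}"

definition pure_dim :: "nat \<Rightarrow> 'a set set \<Rightarrow> bool" where
  "pure_dim d X \<longleftrightarrow> facets X \<noteq> {} \<and> (\<forall>\<sigma>\<in>facets X. card \<sigma> = d + 1)"

definition normal_pseudomanifold :: "nat \<Rightarrow> 'a set set \<Rightarrow> bool" where
  "normal_pseudomanifold d X \<longleftrightarrow>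
     d \<ge> 1 \<and> simplicial_complex X \<and> pure_dim d X \<and>
     (\<forall>\<sigma>\<in>X. card \<sigma> = d \<longrightarrow> card {\<tau> \<in> facets X. \<sigma> \<subseteq> \<tau>} = 2) \<and>
     (\<forall>\<alpha>\<in>X. card \<alpha> + 1 \<le> d \<longrightarrow> connected_complex (link X \<alpha>))"

definition rigid :: "nat \<Rightarrow> nat \<Rightarrow> 'a set set \<Rightarrow> bool" where
  "rigid q d X \<longleftrightarrow> connected_complex X \<and>
     (\<forall>A. A \<subseteq> vertices X \<longrightarrow> (\<exists>\<sigma>\<in>X. card \<sigma> = d + 1 \<and> A \<inter> \<sigma> = {}) \<longrightarrow>
        card {e \<in> edges X. e \<inter> A \<noteq> {}} \<ge> q * card A)"

definition minimally_rigid :: "nat \<Rightarrow> nat \<Rightarrow> 'a set set \<Rightarrow> bool" where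
  "minimally_rigid q d X \<longleftrightarrow> rigid q d X \<and>
     int (card (edges X)) = (int (card (vertices X)) - int d - 1) * int q + int ((d + 1) choose 2)"

definition standard_sphere :: "'a set \<Rightarrow> 'a set set" where
  "standard_sphere S = {\<sigma>. \<sigma> \<subset> S}"

definition star_vertex :: "'a set set \<Rightarrow> 'a set \<Rightarrow> 'a \<Rightarrow> 'a set set" where
  "star_vertex X \<sigma> v = (X - {\<sigma>}) \<union> {insert v \<tau> | \<tau>. \<tau> \<subset> \<sigma>}"

text \<open>Stacked d-spheres (closed under relabelling of vertices, since the base sphere
  may sit on any (d+2)-set and new vertices are arbitrary fresh labels).\<close>
inductive_set stacked_sphere :: "nat \<Rightarrow> 'a set set set" for d :: nat where
  base: "finite S \<Longrightarrow> card S = d + 2 \<Longrightarrow> standard_sphere S \<in> stacked_sphere d"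
| star: "X \<in> stacked_sphere d \<Longrightarrow> \<sigma> \<in> facets X \<Longrightarrow> card \<sigma> = d + 1 \<Longrightarrow> v \<notin> vertices X
         \<Longrightarrow> star_vertex X \<sigma> v \<in> stacked_sphere d"

end

theory Submission
  imports Defs
begin

text \<open>
  Induction on the number of vertices. A minimally 4-rigid normal 3-pseudomanifold X has a vertex
  u of degree four; its link is then the boundary of the tetrahedron \<sigma> on its neighbours. If \<sigma>
  is a face, X is the boundary of the 4-simplex u * \<sigma>; otherwise deleting u and filling in \<sigma>
  gives a smaller minimally 4-rigid normal 3-pseudomanifold from which X is obtained by starring
  u into \<sigma>.

  The degree-four vertex comes from tight vertex sets, those B containing a facet that span
  exactly 4 |B| - 10 edges. Rigidity applied to the complement shows that no such B spans more,
  so tight sets sharing a facet have a tight union. Facets are tight, and so are closed vertex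
  stars, because the link of a vertex with n neighbours has at least 3 n - 6 edges: its dual
  graph stays connected after deleting a spanning tree of the link graph, which follows from
  parity arguments in the links of edges, all of them cycles. A maximal proper tight set
  therefore misses a single vertex, and counting edges shows that this vertex has degree four.
\<close>

section \<open>Parity and walks in graphs\<close>

lemma even_card_if_fixpoint_free_involution:
  assumes "finite S" "\<forall>z\<in>S. f z \<in> S \<and> f (f z) = z \<and> f z \<noteq> z"
  shows "even (card S)"
  using assms
proof (induction "card S" arbitrary: S rule: less_induct)
  case less
  show ?case
  proof (cases "S = {}")
    case False
    then obtain z where z: "z \<in> S" by blast
    let ?S' = "S - {z, f z}"
    have fz: "f z \<in> S" "f z \<noteq> z" using less.prems z by auto
    then have card_S: "card S = card ?S' + 2"
      using less.prems(1) z card_mono[OF less.prems(1), of "{z, f z}"] by (simp add: card_Diff_subset)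
    have "\<forall>y\<in>?S'. f y \<in> ?S' \<and> f (f y) = y \<and> f y \<noteq> y"
      using less.prems(2) z by (metis Diff_iff insertCI insertE singletonD)
    then have "even (card ?S')"
      using less.hyps[of ?S'] less.prems(1) card_S by simp
    then show ?thesis using card_S by simp
  qed simp
qed

text \<open>Handshake argument: the ordered pairs of adjacent vertices of K come in reversed pairs, but
  counting them by their first entry gives 2 |K| - 1.\<close>

lemma card_neighbours_outside_2_regular_ne_1:
  fixes adj :: "'b \<Rightarrow> 'b \<Rightarrow> bool"
  assumes fin: "finite K" and xK: "x \<notin> K"
    and sym: "\<And>a b. adj a b \<Longrightarrow> adj b a"
    and irr: "\<And>a. \<not> adj a a"
    and deg: "\<And>k. k \<in> K \<Longrightarrow> card {w. adj k w} = 2"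
    and closed: "\<And>k w. k \<in> K \<Longrightarrow> adj k w \<Longrightarrow> w \<in> K \<or> w = x"
  shows "card {k\<in>K. adj k x} \<noteq> 1"
proof
  assume one: "card {k\<in>K. adj k x} = 1"
  let ?P = "{(k,w). k \<in> K \<and> w \<in> K \<and> adj k w}"
  have "even (card ?P)"
    by (rule even_card_if_fixpoint_free_involution[where f = "\<lambda>(a,b). (b,a)"])
      (use fin sym irr in \<open>auto intro: finite_subset[of _ "K \<times> K"]\<close>)
  moreover have "card ?P = (\<Sum>k\<in>K. card {w\<in>K. adj k w})"
  proof -
    have "?P = (SIGMA k:K. {w\<in>K. adj k w})" by auto
    then show ?thesis using fin by simp
  qed
  moreover have inner: "card {w\<in>K. adj k w} + (if adj k x then 1 else 0) = 2" if k: "k \<in> K" for k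
  proof -
    have "finite {w. adj k w}" using deg[OF k] by (metis card.infinite zero_neq_numeral)
    moreover have "{w. adj k w} = {w\<in>K. adj k w} \<union> (if adj k x then {x} else {})"
      using closed[OF k] by auto
    ultimately have "card {w. adj k w} = card {w\<in>K. adj k w} + card (if adj k x then {x} else {})"
      using card_Un_disjoint[of "{w\<in>K. adj k w}" "if adj k x then {x} else {}"] xK by auto
    then show ?thesis using deg[OF k] by (auto split: if_splits)
  qed
  moreover have "(\<Sum>k\<in>K. (if adj k x then 1 else 0::nat)) = card {k\<in>K. adj k x}"
    using fin by (simp add: sum.If_cases Int_def)
  ultimately have "even (card ?P)" "card ?P + 1 = 2 * card K"
    using one sum.distrib[of "\<lambda>k. card {w\<in>K. adj k w}" "\<lambda>k. if adj k x then 1 else 0" K]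
    by (simp_all add: sum.cong[OF refl inner])
  then show False by presburger
qed

text \<open>Walks in \<open>G \<inter> UNIV \<times> W\<close> are walks staying in W. If neither alternative holds, the vertices
  reachable from z1 inside W would send exactly one edge to x, against the handshake argument.\<close>

lemma two_regular_walk_from_neighbour:
  assumes sym: "\<And>a b. (a,b) \<in> G \<Longrightarrow> (b,a) \<in> G" and irr: "\<And>a. (a,a) \<notin> G"
    and fin: "finite V"
    and deg: "\<And>v. v \<in> V \<Longrightarrow> card {w. (v,w) \<in> G} = 2"
    and closed: "\<And>v w. v \<in> V \<Longrightarrow> (v,w) \<in> G \<Longrightarrow> w \<in> V"
    and x: "x \<in> V" "{w. (x,w) \<in> G} = {z1, z2}" "x \<notin> W" and z1: "z1 \<in> W"
  shows "(z1,z2) \<in> (G \<inter> UNIV \<times> W)\<^sup>* \<or>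
    (\<exists>c b. (z1,c) \<in> (G \<inter> UNIV \<times> W)\<^sup>* \<and> (c,b) \<in> G \<and> b \<notin> W \<and> b \<noteq> x)"
proof (rule ccontr)
  assume neither: "\<not> ?thesis"
  define K where "K = {w. (z1,w) \<in> (G \<inter> UNIV \<times> W)\<^sup>*}"
  have z12: "z1 \<noteq> z2" using deg[OF x(1)] x(2) by (metis card_2_iff doubleton_eq_iff)
  have K_in: "k \<in> V \<and> k \<in> W" if "k \<in> K" for k
  proof -
    have "(z1,k) \<in> (G \<inter> UNIV \<times> W)\<^sup>*" using that unfolding K_def by simp
    then show ?thesis
    proof (induction rule: rtrancl_induct)
      case base
      have "(x,z1) \<in> G" using x(2) by auto
      then show ?case using closed[OF x(1)] z1 by blast
    qed (use closed in blast)
  qed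
  have "card {k\<in>K. (k,x) \<in> G} \<noteq> 1"
  proof (rule card_neighbours_outside_2_regular_ne_1[where adj = "\<lambda>a b. (a,b) \<in> G"])
    show "finite K" using fin K_in by (meson finite_subset subsetI)
    show "x \<notin> K" using K_in x(3) by blast
    show "k \<in> K \<Longrightarrow> (k,w) \<in> G \<Longrightarrow> w \<in> K \<or> w = x" for k w
      using neither unfolding K_def by (cases "w \<in> W") (auto intro: rtrancl_into_rtrancl)
  qed (use sym irr deg K_in in auto)
  moreover have "{k\<in>K. (k,x) \<in> G} = {z1}"
  proof -
    have "z1 \<in> K" "z2 \<notin> K" using neither unfolding K_def by auto
    then show ?thesis using x(2) sym by blast
  qed
  ultimately show False by simp
qed

lemma rtrancl_leaves_set:
  assumes "(a,b) \<in> R\<^sup>*" "a \<in> S" "b \<notin> S"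
  shows "\<exists>x y. (x,y) \<in> R \<and> x \<in> S \<and> y \<notin> S"
  using assms by (induction rule: rtrancl_induct) auto

lemma rtrancl_stays_in_closed_set:
  assumes "(a,b) \<in> R\<^sup>*" "a \<in> S" "\<And>x y. (x,y) \<in> R \<Longrightarrow> x \<in> S \<Longrightarrow> y \<in> S"
  shows "b \<in> S"
  using assms by (induction rule: rtrancl_induct) auto

lemma rtrancl_bypass_vertex:
  assumes "(a,c) \<in> R\<^sup>*" "a \<noteq> u" "c \<noteq> u"
    and keep: "\<And>x y. (x,y) \<in> R \<Longrightarrow> x \<noteq> u \<Longrightarrow> y \<noteq> u \<Longrightarrow> (x,y) \<in> R'"
    and bypass: "\<And>x y. (x,u) \<in> R \<Longrightarrow> (u,y) \<in> R \<Longrightarrow> x \<noteq> u \<Longrightarrow> y \<noteq> u \<Longrightarrow> x \<noteq> y \<Longrightarrow> (x,y) \<in> R'"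
  shows "(a,c) \<in> R'\<^sup>*"
proof -
  have "(c \<noteq> u \<longrightarrow> (a,c) \<in> R'\<^sup>*) \<and> (c = u \<longrightarrow> (\<exists>a'. (a,a') \<in> R'\<^sup>* \<and> (a',u) \<in> R \<and> a' \<noteq> u))"
    using assms(1)
  proof (induction rule: rtrancl_induct)
    case (step c d)
    show ?case
    proof (cases "c = u")
      case False
      then show ?thesis using step keep by (auto intro: rtrancl_into_rtrancl)
    next
      case True
      then obtain a' where a': "(a,a') \<in> R'\<^sup>*" "(a',u) \<in> R" "a' \<noteq> u" using step.IH by auto
      then show ?thesis
        using bypass[OF a'(2)] step.hyps(2) True by (cases "a' = d") (auto intro: rtrancl_into_rtrancl)
    qed
  qed (use assms(2) in simp)
  then show ?thesis using assms(3) by blast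
qed

section \<open>Dual graphs\<close>

definition dual_graph :: "'a set set \<Rightarrow> 'a set set \<Rightarrow> ('a set \<times> 'a set) set" where
  "dual_graph T S = {(t,t'). t \<in> T \<and> t' \<in> T \<and> t \<noteq> t' \<and> t \<inter> t' \<in> S}"

definition shared_ridges :: "'a set set \<Rightarrow> 'a set set \<Rightarrow> 'a set set" where
  "shared_ridges S R = {e \<in> S. \<exists>t\<in>R. \<exists>t'\<in>R. t \<noteq> t' \<and> t \<inter> t' = e}"

lemma card_shared_ridges_insert:
  assumes finS: "finite S" and R: "R \<subseteq> T" "t \<in> R" "t' \<notin> R" and tt': "(t,t') \<in> dual_graph T S"
    and le2: "\<forall>e\<in>S. card {t\<in>T. e \<subseteq> t} \<le> 2" and finT: "finite T"
  shows "Suc (card (shared_ridges S R)) \<le> card (shared_ridges S (insert t' R))"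
proof -
  define e where "e = t \<inter> t'"
  have t: "t \<in> T" "t' \<in> T" "t \<noteq> t'" "e \<in> S" using tt' unfolding dual_graph_def e_def by auto
  have "e \<notin> shared_ridges S R"
  proof
    assume "e \<in> shared_ridges S R"
    then obtain t1 t2 where t12: "t1 \<in> R" "t2 \<in> R" "t1 \<noteq> t2" "t1 \<inter> t2 = e"
      unfolding shared_ridges_def by blast
    have "{t1,t2,t'} \<subseteq> {s\<in>T. e \<subseteq> s}" using t12 R(1) t(2) e_def by blast
    moreover have "t' \<noteq> t1" "t' \<noteq> t2" using t12(1,2) R(3) by auto
    then have "card {t1,t2,t'} = 3" using t12(3) by simp
    ultimately have "3 \<le> card {s\<in>T. e \<subseteq> s}"
      using card_mono[of "{s\<in>T. e \<subseteq> s}" "{t1,t2,t'}"] finT by simp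
    then show False using le2 t(4) by fastforce
  qed
  moreover have "insert e (shared_ridges S R) \<subseteq> shared_ridges S (insert t' R)"
    using t R(2) unfolding shared_ridges_def e_def by blast
  moreover have "finite (shared_ridges S X)" for X unfolding shared_ridges_def using finS by simp
  ultimately show ?thesis using card_mono[of _ "insert e (shared_ridges S R)"] by force
qed

text \<open>A connected dual graph has a spanning tree, and each of its edges uses a different ridge.\<close>

lemma card_le_Suc_card_ridges_if_dual_connected:
  assumes finT: "finite T" and ne: "T \<noteq> {}" and finS: "finite S"
    and conn: "\<forall>t\<in>T. \<forall>t'\<in>T. (t,t') \<in> (dual_graph T S)\<^sup>*"
    and le2: "\<forall>e\<in>S. card {t\<in>T. e \<subseteq> t} \<le> 2"
  shows "card T \<le> card S + 1"
proof -
  have grow: "\<exists>R\<subseteq>T. card R = k \<and> k \<le> card (shared_ridges S R) + 1"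
    if "1 \<le> k" "k \<le> card T" for k
    using that
  proof (induction k)
    case (Suc k)
    show ?case
    proof (cases "k = 0")
      case True
      obtain t0 where "t0 \<in> T" using ne by blast
      then show ?thesis using True by (intro exI[of _ "{t0}"]) auto
    next
      case False
      then obtain R where R: "R \<subseteq> T" "card R = k" "k \<le> card (shared_ridges S R) + 1"
        using Suc by auto
      have "R \<noteq> {}" "R \<noteq> T" using R(2) Suc.prems(2) False by auto
      then obtain a b where "a \<in> R" "b \<in> T - R" using R(1) by blast
      then obtain t t' where tt': "(t,t') \<in> dual_graph T S" "t \<in> R" "t' \<notin> R"
        using rtrancl_leaves_set[of a b "dual_graph T S" R] conn R(1) by blast
      then have "t' \<in> T" unfolding dual_graph_def by simp
      moreover have "card (insert t' R) = Suc k" using R(1,2) tt'(3) finT by (simp add: finite_subset)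
      moreover note card_shared_ridges_insert[OF finS R(1) tt'(2,3,1) le2 finT]
      ultimately show ?thesis using R by (intro exI[of _ "insert t' R"]) auto
    qed
  qed simp
  obtain R where "R \<subseteq> T" "card T \<le> card (shared_ridges S R) + 1"
    using grow[of "card T"] ne finT by (auto simp: Suc_leI card_gt_0_iff)
  moreover have "card (shared_ridges S R) \<le> card S"
    by (rule card_mono[OF finS]) (auto simp: shared_ridges_def)
  ultimately show ?thesis by simp
qed

section \<open>Links in normal 3-pseudomanifolds\<close>

definition link_vertices :: "'a set set \<Rightarrow> 'a set \<Rightarrow> 'a set" where
  "link_vertices X \<alpha> = {y. y \<notin> \<alpha> \<and> insert y \<alpha> \<in> X}"

definition link_graph :: "'a set set \<Rightarrow> 'a set \<Rightarrow> ('a \<times> 'a) set" where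
  "link_graph X \<alpha> = {(x,y). x \<noteq> y \<and> x \<notin> \<alpha> \<and> y \<notin> \<alpha> \<and> insert x (insert y \<alpha>) \<in> X}"

lemma simplicial_complex_subset: "simplicial_complex X \<Longrightarrow> \<sigma> \<in> X \<Longrightarrow> \<tau> \<subseteq> \<sigma> \<Longrightarrow> \<tau> \<in> X"
  unfolding simplicial_complex_def by blast

lemma simplicial_complex_finite_face: "simplicial_complex X \<Longrightarrow> \<sigma> \<in> X \<Longrightarrow> finite \<sigma>"
  unfolding simplicial_complex_def by blast

lemma link_empty: "link X {} = X"
  unfolding link_def by auto

lemma link_graph_sym: "(a,b) \<in> link_graph X \<alpha> \<Longrightarrow> (b,a) \<in> link_graph X \<alpha>"
  unfolding link_graph_def by (auto simp: insert_commute)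

lemma link_graph_irrefl: "(a,a) \<notin> link_graph X \<alpha>"
  unfolding link_graph_def by simp

lemma vertices_link:
  assumes "simplicial_complex X"
  shows "vertices (link X \<alpha>) = link_vertices X \<alpha>"
proof (intro set_eqI iffI)
  fix x assume "x \<in> vertices (link X \<alpha>)"
  then obtain \<beta> where \<beta>: "\<beta> \<inter> \<alpha> = {}" "\<alpha> \<union> \<beta> \<in> X" "x \<in> \<beta>"
    unfolding vertices_def link_def by auto
  then have "insert x \<alpha> \<subseteq> \<alpha> \<union> \<beta>" "x \<notin> \<alpha>" by auto
  then show "x \<in> link_vertices X \<alpha>"
    using simplicial_complex_subset[OF assms \<beta>(2)] unfolding link_vertices_def by simp
next
  fix x assume "x \<in> link_vertices X \<alpha>"
  then have x: "x \<notin> \<alpha>" "insert x \<alpha> \<in> X" unfolding link_vertices_def by simp_all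
  then have "{x} \<in> X" using simplicial_complex_subset[OF assms x(2), of "{x}"] by simp
  then have "{x} \<in> link X \<alpha>" using x unfolding link_def by simp
  then show "x \<in> vertices (link X \<alpha>)" unfolding vertices_def by blast
qed

lemma edges_link_iff:
  assumes "simplicial_complex X"
  shows "{a,b} \<in> edges (link X \<alpha>) \<longleftrightarrow> (a,b) \<in> link_graph X \<alpha>"
proof
  have union: "\<alpha> \<union> {a,b} = insert a (insert b \<alpha>)" by auto
  assume "{a,b} \<in> edges (link X \<alpha>)"
  then have "card {a,b} = 2" "{a,b} \<inter> \<alpha> = {}" "\<alpha> \<union> {a,b} \<in> X"
    unfolding edges_def link_def by simp_all
  moreover from this(1) have "a \<noteq> b" by (cases "a = b") simp_all
  ultimately show "(a,b) \<in> link_graph X \<alpha>" unfolding link_graph_def union by simp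
next
  assume "(a,b) \<in> link_graph X \<alpha>"
  then have ab: "a \<noteq> b" "a \<notin> \<alpha>" "b \<notin> \<alpha>" "insert a (insert b \<alpha>) \<in> X"
    unfolding link_graph_def by simp_all
  have "{a,b} \<in> X" by (rule simplicial_complex_subset[OF assms ab(4)]) auto
  moreover have "\<alpha> \<union> {a,b} = insert a (insert b \<alpha>)" by auto
  ultimately show "{a,b} \<in> edges (link X \<alpha>)" using ab unfolding edges_def link_def by simp
qed

lemma connected_link_iff:
  assumes "simplicial_complex X"
  shows "connected_complex (link X \<alpha>) \<longleftrightarrow>
    (\<forall>x\<in>link_vertices X \<alpha>. \<forall>y\<in>link_vertices X \<alpha>. (x,y) \<in> (link_graph X \<alpha>)\<^sup>*)"
proof -
  have "{(a,b). {a,b} \<in> edges (link X \<alpha>)} = link_graph X \<alpha>"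
    using edges_link_iff[OF assms] by auto
  then show ?thesis unfolding connected_complex_def vertices_link[OF assms] by simp
qed

locale pseudomanifold3 =
  fixes X :: "'a set set"
  assumes normal_pseudomanifold: "normal_pseudomanifold 3 X"
begin

lemma simplicial: "simplicial_complex X"
  using normal_pseudomanifold unfolding normal_pseudomanifold_def by simp

lemma finite_complex: "finite X"
  using simplicial unfolding simplicial_complex_def by simp

lemma face_subset: "\<sigma> \<in> X \<Longrightarrow> \<tau> \<subseteq> \<sigma> \<Longrightarrow> \<tau> \<in> X"
  using simplicial_complex_subset[OF simplicial] .

lemma finite_face: "\<sigma> \<in> X \<Longrightarrow> finite \<sigma>"
  using simplicial_complex_finite_face[OF simplicial] .

lemma face_in_facet:
  assumes "\<rho> \<in> X" obtains \<sigma> where "\<sigma> \<in> X" "card \<sigma> = 4" "\<rho> \<subseteq> \<sigma>"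
proof -
  obtain m where m: "m \<in> X" "\<rho> \<subseteq> m" "\<forall>b\<in>X. m \<subseteq> b \<longrightarrow> m = b"
    using finite_has_maximal2[OF finite_complex assms] by auto
  then have "m \<in> facets X" unfolding facets_def by auto
  then have "card m = 4"
    using normal_pseudomanifold unfolding normal_pseudomanifold_def pure_dim_def by auto
  then show ?thesis using that m by auto
qed

lemma card_face_le:
  assumes "\<rho> \<in> X" shows "card \<rho> \<le> 4"
proof -
  obtain \<sigma> where "\<sigma> \<in> X" "card \<sigma> = 4" "\<rho> \<subseteq> \<sigma>" using face_in_facet[OF assms] .
  then show ?thesis using card_mono[OF finite_face] by metis
qed

lemma facets_eq: "facets X = {\<sigma>\<in>X. card \<sigma> = 4}"
proof -
  have "\<tau> = \<sigma>" if "\<sigma> \<in> X" "card \<sigma> = 4" "\<tau> \<in> X" "\<sigma> \<subseteq> \<tau>" for \<sigma> \<tau>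
    using that card_seteq[OF finite_face, of \<tau> \<sigma>] card_face_le[of \<tau>] by simp
  moreover have "card \<sigma> = 4" if "\<sigma> \<in> facets X" for \<sigma>
    using that normal_pseudomanifold unfolding normal_pseudomanifold_def pure_dim_def by auto
  ultimately show ?thesis unfolding facets_def by auto
qed

lemma card_facets_containing_ridge:
  assumes "\<tau> \<in> X" "card \<tau> = 3"
  shows "card {\<sigma>\<in>X. card \<sigma> = 4 \<and> \<tau> \<subseteq> \<sigma>} = 2"
proof -
  have "card {\<sigma> \<in> facets X. \<tau> \<subseteq> \<sigma>} = 2"
    using normal_pseudomanifold assms unfolding normal_pseudomanifold_def by auto
  then show ?thesis unfolding facets_eq by (simp add: conj_assoc)
qed

lemma link_graph_connected:
  assumes "\<alpha> \<in> X" "card \<alpha> \<le> 2" "x \<in> link_vertices X \<alpha>" "y \<in> link_vertices X \<alpha>"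
  shows "(x,y) \<in> (link_graph X \<alpha>)\<^sup>*"
  using normal_pseudomanifold assms connected_link_iff[OF simplicial]
  unfolding normal_pseudomanifold_def by auto

lemma link_graph_leaves_set:
  assumes "\<alpha> \<in> X" "card \<alpha> \<le> 2" "a \<in> link_vertices X \<alpha>" "a \<in> T" "b \<in> link_vertices X \<alpha>" "b \<notin> T"
  obtains y w where "(y,w) \<in> link_graph X \<alpha>" "y \<in> T" "w \<notin> T"
  using rtrancl_leaves_set[OF link_graph_connected[OF assms(1,2,3,5)] assms(4,6)] that by blast

lemma empty_face: "{} \<in> X"
proof -
  obtain \<sigma> where "\<sigma> \<in> facets X"
    using normal_pseudomanifold unfolding normal_pseudomanifold_def pure_dim_def by blast
  then show ?thesis using face_subset unfolding facets_def by blast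
qed

lemma vertex_iff: "x \<in> vertices X \<longleftrightarrow> {x} \<in> X"
  unfolding vertices_def using face_subset by auto

lemma link_vertices_empty: "link_vertices X {} = vertices X"
  unfolding link_vertices_def using vertex_iff by auto

lemma finite_vertices: "finite (vertices X)"
  unfolding vertices_def using finite_complex finite_face by auto

lemma finite_link_vertices: "finite (link_vertices X \<alpha>)"
  by (rule finite_subset[OF _ finite_vertices]) (auto simp: link_vertices_def vertices_def)

lemma link_graph_vertices:
  assumes "(a,b) \<in> link_graph X \<alpha>"
  shows "a \<in> link_vertices X \<alpha> \<and> b \<in> link_vertices X \<alpha>"
  using assms face_subset[of "insert a (insert b \<alpha>)"]
  unfolding link_graph_def link_vertices_def by auto

lemma card_link_vertices_ridge:
  assumes "\<alpha> \<in> X" "card \<alpha> = 3" shows "card (link_vertices X \<alpha>) = 2"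
proof -
  have "{\<sigma>\<in>X. card \<sigma> = 4 \<and> \<alpha> \<subseteq> \<sigma>} = (\<lambda>w. insert w \<alpha>) ` link_vertices X \<alpha>"
  proof (intro set_eqI iffI)
    fix \<sigma> assume \<sigma>: "\<sigma> \<in> {\<sigma>\<in>X. card \<sigma> = 4 \<and> \<alpha> \<subseteq> \<sigma>}"
    then have "card (\<sigma> - \<alpha>) = 1"
      using assms(2) finite_face[OF assms(1)] card_Diff_subset[of \<alpha> \<sigma>] by auto
    then obtain w where "\<sigma> - \<alpha> = {w}" using card_1_singletonE by blast
    then have "\<sigma> = insert w \<alpha>" "w \<notin> \<alpha>" using \<sigma> by auto
    then show "\<sigma> \<in> (\<lambda>w. insert w \<alpha>) ` link_vertices X \<alpha>"
      using \<sigma> unfolding link_vertices_def by (auto intro!: image_eqI[of _ _ w])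
  qed (use assms finite_face in \<open>auto simp: link_vertices_def\<close>)
  moreover have "inj_on (\<lambda>w. insert w \<alpha>) (link_vertices X \<alpha>)"
    unfolding link_vertices_def inj_on_def by auto
  ultimately show ?thesis
    using card_facets_containing_ridge[OF assms] card_image by metis
qed

lemma card_link_graph_neighbours:
  assumes "\<alpha> \<in> X" "card \<alpha> = 2" "w \<in> link_vertices X \<alpha>"
  shows "card {w'. (w,w') \<in> link_graph X \<alpha>} = 2"
proof -
  have "{w'. (w,w') \<in> link_graph X \<alpha>} = link_vertices X (insert w \<alpha>)"
    using assms(3) unfolding link_graph_def link_vertices_def by (auto simp: insert_commute)
  moreover have "card (insert w \<alpha>) = 3"
    using assms finite_face unfolding link_vertices_def by auto
  moreover have "insert w \<alpha> \<in> X" using assms(3) unfolding link_vertices_def by simp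
  ultimately show ?thesis using card_link_vertices_ridge by simp
qed

lemma link_graph_neighbours_eq:
  assumes "\<alpha> \<in> X" "card \<alpha> = 2" "(x,z1) \<in> link_graph X \<alpha>" "(x,z2) \<in> link_graph X \<alpha>" "z1 \<noteq> z2"
  shows "{w. (x,w) \<in> link_graph X \<alpha>} = {z1,z2}"
proof -
  have "x \<in> link_vertices X \<alpha>" using link_graph_vertices assms(3) by blast
  then have "card {w. (x,w) \<in> link_graph X \<alpha>} = 2" using card_link_graph_neighbours assms(1,2) by blast
  moreover from this have "finite {w. (x,w) \<in> link_graph X \<alpha>}" by (intro card_ge_0_finite) simp
  moreover have "{z1,z2} \<subseteq> {w. (x,w) \<in> link_graph X \<alpha>}" using assms(3,4) by blast
  ultimately show ?thesis using card_seteq[of _ "{z1,z2}"] assms(5) by simp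
qed

lemma link_graph_walk_from_neighbour:
  assumes "\<alpha> \<in> X" "card \<alpha> = 2" "(x,z1) \<in> link_graph X \<alpha>" "(x,z2) \<in> link_graph X \<alpha>" "z1 \<noteq> z2"
    and "x \<notin> W" "z1 \<in> W"
  shows "(z1,z2) \<in> (link_graph X \<alpha> \<inter> UNIV \<times> W)\<^sup>* \<or>
    (\<exists>c b. (z1,c) \<in> (link_graph X \<alpha> \<inter> UNIV \<times> W)\<^sup>* \<and> (c,b) \<in> link_graph X \<alpha> \<and> b \<notin> W \<and> b \<noteq> x)"
  by (rule two_regular_walk_from_neighbour[OF link_graph_sym link_graph_irrefl finite_link_vertices
        card_link_graph_neighbours[OF assms(1,2)] _ _ link_graph_neighbours_eq[OF assms(1-5)] assms(6,7)])
    (use link_graph_vertices assms(3) in blast)+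

end

section \<open>The link of a vertex has many edges\<close>

definition link_triangles :: "'a set set \<Rightarrow> 'a \<Rightarrow> 'a set set" where
  "link_triangles X s = {t. card t = 3 \<and> s \<notin> t \<and> insert s t \<in> X}"

definition link_edges :: "'a set set \<Rightarrow> 'a \<Rightarrow> 'a set set" where
  "link_edges X s = {e. card e = 2 \<and> s \<notin> e \<and> insert s e \<in> X}"

lemma inter_eq_if_card_3:
  assumes "card t = 3" "card t' = 3" "t \<noteq> t'" "e \<subseteq> t" "e \<subseteq> t'" "card e = 2"
  shows "t \<inter> t' = e"
proof -
  have fin: "finite t" "finite t'" using assms(1,2) card.infinite by fastforce+
  have "card (t \<inter> t') \<noteq> 3"
    using card_seteq[of t "t \<inter> t'"] card_seteq[of t' "t \<inter> t'"] fin assms(1-3) by auto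
  moreover have "card (t \<inter> t') \<le> 3" using card_mono[OF fin(1), of "t \<inter> t'"] assms(1) by auto
  moreover have "e \<subseteq> t \<inter> t'" using assms by auto
  ultimately show ?thesis using card_seteq[of "t \<inter> t'" e] fin assms(6) by auto
qed

lemma card_2_subsets_of_card_3:
  assumes "card t = 3" shows "card {e. e \<subseteq> t \<and> card e = 2} = 3"
proof -
  have "finite t" using assms card.infinite by force
  then show ?thesis using n_subsets[of t 2] assms by (simp add: numeral_eq_Suc)
qed

context pseudomanifold3
begin

lemma finite_link_triangles: "finite (link_triangles X s)"
  by (rule finite_subset[OF _ finite_complex]) (auto simp: link_triangles_def intro: face_subset)

lemma finite_link_edges: "finite (link_edges X s)"
  by (rule finite_subset[OF _ finite_complex]) (auto simp: link_edges_def intro: face_subset)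

lemma card_link_triangles_containing:
  assumes e: "e \<in> link_edges X s"
  shows "card {t\<in>link_triangles X s. e \<subseteq> t} = 2"
proof -
  have e2: "card e = 2" "s \<notin> e" "insert s e \<in> X" using e unfolding link_edges_def by auto
  then have fe: "finite e" using card.infinite by fastforce
  have "{t\<in>link_triangles X s. e \<subseteq> t} = (\<lambda>w. insert w e) ` link_vertices X (insert s e)"
  proof (intro set_eqI iffI)
    fix t assume t: "t \<in> {t\<in>link_triangles X s. e \<subseteq> t}"
    then have t3: "card t = 3" "s \<notin> t" "insert s t \<in> X" "e \<subseteq> t"
      unfolding link_triangles_def by auto
    then have "card (t - e) = 1" using e2 fe card_Diff_subset[of e t] by auto
    then obtain w where "t - e = {w}" using card_1_singletonE by blast
    then have "t = insert w e" "w \<notin> insert s e" using t3 by auto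
    then show "t \<in> (\<lambda>w. insert w e) ` link_vertices X (insert s e)"
      using t3(3) unfolding link_vertices_def by (auto simp: insert_commute)
  qed (use e2 fe in \<open>auto simp: link_vertices_def link_triangles_def insert_commute\<close>)
  moreover have "inj_on (\<lambda>w. insert w e) (link_vertices X (insert s e))"
    unfolding inj_on_def link_vertices_def by auto
  moreover have "card (insert s e) = 3" using e2 fe by auto
  ultimately show ?thesis using card_link_vertices_ridge[OF e2(3)] by (simp add: card_image)
qed

lemma link_triangle_edge:
  assumes "t \<in> link_triangles X s" "y \<in> t" "w \<in> t" "y \<noteq> w"
  shows "{y,w} \<in> link_edges X s"
proof -
  have "insert s {y,w} \<in> X"
    using assms face_subset[of "insert s t" "insert s {y,w}"] unfolding link_triangles_def by blast
  then show ?thesis using assms unfolding link_triangles_def link_edges_def by auto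
qed

lemma link_graph_link_edge: "(x,y) \<in> link_graph X {s} \<Longrightarrow> {x,y} \<in> link_edges X s"
  unfolding link_graph_def link_edges_def by (auto simp: insert_commute)

lemma link_vertices_pair_iff:
  assumes "y \<noteq> s"
  shows "w \<in> link_vertices X {s,y} \<longleftrightarrow> w \<noteq> y \<and> {y,w} \<in> link_edges X s"
  using assms unfolding link_vertices_def link_edges_def by (auto simp: insert_commute)

lemma link_graph_pair_triangle:
  assumes "(w,w') \<in> link_graph X {s,y}" "y \<noteq> s"
  shows "{y,w,w'} \<in> link_triangles X s"
proof -
  have "insert s {y,w,w'} = insert w (insert w' {s,y})" by auto
  then show ?thesis using assms unfolding link_graph_def link_triangles_def by auto
qed

lemma dual_graph_link_step:
  assumes "t \<in> link_triangles X s" "t' \<in> link_triangles X s" "{y,w} \<subseteq> t" "{y,w} \<subseteq> t'"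
    "{y,w} \<in> S" "y \<noteq> w"
  shows "(t,t') \<in> (dual_graph (link_triangles X s) S)\<^sup>*"
proof (cases "t = t'")
  case False
  have "t \<inter> t' = {y,w}"
    by (rule inter_eq_if_card_3) (use assms False in \<open>auto simp: link_triangles_def\<close>)
  then have "(t,t') \<in> dual_graph (link_triangles X s) S"
    using assms False unfolding dual_graph_def by simp
  then show ?thesis by blast
qed simp

lemma dual_graph_link_around_vertex:
  assumes walk: "(w1,w2) \<in> (link_graph X {s,y} \<inter> {(a,b). {y,b} \<in> S})\<^sup>*"
    and w1: "{y,w1} \<in> S" and S: "S \<subseteq> link_edges X s" and ys: "y \<noteq> s"
    and t1: "t1 \<in> link_triangles X s" "{y,w1} \<subseteq> t1"
    and t2: "t2 \<in> link_triangles X s" "{y,w2} \<subseteq> t2"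
  shows "(t1,t2) \<in> (dual_graph (link_triangles X s) S)\<^sup>*"
proof -
  have ne: "y \<noteq> w" if "{y,w} \<in> S" for w
    using that S unfolding link_edges_def by (cases "y = w") auto
  have "\<forall>t2\<in>link_triangles X s. {y,w2} \<subseteq> t2 \<longrightarrow> (t1,t2) \<in> (dual_graph (link_triangles X s) S)\<^sup>*"
    using walk
  proof (induction rule: rtrancl_induct)
    case base
    then show ?case using dual_graph_link_step[OF t1(1) _ t1(2) _ w1 ne[OF w1]] by blast
  next
    case (step w w')
    have ww': "(w,w') \<in> link_graph X {s,y}" "{y,w'} \<in> S" using step.hyps(2) by auto
    have T: "{y,w,w'} \<in> link_triangles X s" using link_graph_pair_triangle[OF ww'(1) ys] .
    then have "(t1, {y,w,w'}) \<in> (dual_graph (link_triangles X s) S)\<^sup>*" using step.IH by auto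
    then show ?case
      using dual_graph_link_step[OF T _ _ _ ww'(2) ne[OF ww'(2)]] by (meson insert_mono
          rtrancl_trans subset_insertI)
  qed
  then show ?thesis using t2 by blast
qed

lemma dual_graph_link_triangles_at_vertex:
  assumes t: "t \<in> link_triangles X s" "y \<in> t" and t': "t' \<in> link_triangles X s" "y \<in> t'"
  shows "(t,t') \<in> (dual_graph (link_triangles X s) (link_edges X s))\<^sup>*"
proof -
  have ys: "y \<noteq> s" using t unfolding link_triangles_def by auto
  have "\<exists>w\<in>t. w \<noteq> y" if "t \<in> link_triangles X s" for t
  proof (rule ccontr)
    assume "\<not> ?thesis"
    then have "t \<subseteq> {y}" by auto
    then show False using that card_mono[of "{y}" t] unfolding link_triangles_def by simp
  qed
  then obtain w w' where w: "w \<in> t" "w \<noteq> y" and w': "w' \<in> t'" "w' \<noteq> y" using t(1) t'(1) by blast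
  have e: "{y,w} \<in> link_edges X s" "{y,w'} \<in> link_edges X s"
    using link_triangle_edge[OF t w(1)] link_triangle_edge[OF t' w'(1)] w(2) w'(2) by auto
  then have "w \<in> link_vertices X {s,y}" "w' \<in> link_vertices X {s,y}"
    using link_vertices_pair_iff[OF ys] w(2) w'(2) by auto
  moreover have "{s,y} \<in> X"
    using face_subset[of "insert s t" "{s,y}"] t unfolding link_triangles_def by blast
  moreover have "card {s,y} \<le> 2" by (simp add: card_insert_if)
  ultimately have "(w,w') \<in> (link_graph X {s,y})\<^sup>*" using link_graph_connected by blast
  moreover have "link_graph X {s,y} \<subseteq> link_graph X {s,y} \<inter> {(a,b). {y,b} \<in> link_edges X s}"
  proof safe
    fix a b assume "(a,b) \<in> link_graph X {s,y}"
    then show "{y,b} \<in> link_edges X s"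
      using link_graph_vertices link_vertices_pair_iff[OF ys] by blast
  qed
  ultimately have "(w,w') \<in> (link_graph X {s,y} \<inter> {(a,b). {y,b} \<in> link_edges X s})\<^sup>*"
    using rtrancl_mono by blast
  moreover have "{y,w} \<subseteq> t" "{y,w'} \<subseteq> t'" using t t' w w' by auto
  ultimately show ?thesis
    using dual_graph_link_around_vertex[OF _ e(1) order_refl ys t(1) _ t'(1)] by blast
qed

lemma dual_graph_link_connected:
  assumes t: "t \<in> link_triangles X s" and t': "t' \<in> link_triangles X s"
  shows "(t,t') \<in> (dual_graph (link_triangles X s) (link_edges X s))\<^sup>*"
proof -
  have vertex_in_link: "y \<in> link_vertices X {s}" if "T \<in> link_triangles X s" "y \<in> T" for T y
    using that face_subset[of "insert s T" "{y,s}"] unfolding link_triangles_def link_vertices_def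
    by (auto simp: insert_commute)
  have "t \<noteq> {}" "t' \<noteq> {}" using t t' unfolding link_triangles_def by auto
  then obtain y y' where y: "y \<in> t" and y': "y' \<in> t'" by blast
  have "{s} \<in> X" using face_subset[of "insert s t" "{s}"] t unfolding link_triangles_def by blast
  then have "(y,y') \<in> (link_graph X {s})\<^sup>*"
    using link_graph_connected vertex_in_link t t' y y' by simp
  then have "\<forall>T\<in>link_triangles X s. y' \<in> T \<longrightarrow>
      (t,T) \<in> (dual_graph (link_triangles X s) (link_edges X s))\<^sup>*"
  proof (induction rule: rtrancl_induct)
    case base then show ?case using dual_graph_link_triangles_at_vertex[OF t y] by blast
  next
    case (step z z')
    then have "{z,z'} \<in> link_edges X s" using link_graph_link_edge by blast
    then have "{T\<in>link_triangles X s. {z,z'} \<subseteq> T} \<noteq> {}"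
      using card_link_triangles_containing by (metis card.empty zero_neq_numeral)
    then obtain T0 where T0: "T0 \<in> link_triangles X s" "{z,z'} \<subseteq> T0" by blast
    then have tT0: "(t,T0) \<in> (dual_graph (link_triangles X s) (link_edges X s))\<^sup>*"
      using step.IH by blast
    show ?case
    proof (intro ballI impI)
      fix T assume "T \<in> link_triangles X s" "z' \<in> T"
      then have "(T0,T) \<in> (dual_graph (link_triangles X s) (link_edges X s))\<^sup>*"
        using dual_graph_link_triangles_at_vertex[OF T0(1)] T0(2) by blast
      with tT0 show "(t,T) \<in> (dual_graph (link_triangles X s) (link_edges X s))\<^sup>*"
        by (rule rtrancl_trans)
    qed
  qed
  then show ?thesis using t' y' by blast
qed

text \<open>Walk around y from t to t' the long way round the cycle that is the link of the edge
  {s,y}; it uses only edges through y other than {x,y}.\<close>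

lemma dual_graph_link_avoid_edge:
  assumes xy: "(x,y) \<in> link_graph X {s}" and Fy: "\<forall>e\<in>F. y \<notin> e"
    and tt': "t \<in> link_triangles X s" "t' \<in> link_triangles X s" "t \<noteq> t'" "t \<inter> t' = {x,y}"
  shows "(t,t') \<in> (dual_graph (link_triangles X s) (link_edges X s - insert {x,y} F))\<^sup>*"
proof -
  let ?S = "link_edges X s - insert {x,y} F" and ?G = "link_graph X {s,y}"
  have xy': "x \<noteq> y" "x \<noteq> s" "y \<noteq> s" "insert x (insert y {s}) \<in> X"
    using xy unfolding link_graph_def by auto
  have t3: "card t = 3" "s \<notin> t" "insert s t \<in> X" "card t' = 3" "s \<notin> t'" "insert s t' \<in> X"
    using tt' unfolding link_triangles_def by auto
  have xy_sub: "{x,y} \<subseteq> t" "{x,y} \<subseteq> t'" using tt'(4) by blast+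
  have "card (t - {x,y}) = 1" "card (t' - {x,y}) = 1"
    using card_Diff_subset[OF _ xy_sub(1)] card_Diff_subset[OF _ xy_sub(2)] t3(1,4) xy'(1) by simp_all
  then obtain z1 z2 where "t - {x,y} = {z1}" "t' - {x,y} = {z2}" by (meson card_1_singletonE)
  then have z: "t = {x,y,z1}" "t' = {x,y,z2}" "z1 \<notin> {x,y}" "z2 \<notin> {x,y}" using xy_sub by auto
  have z12: "z1 \<noteq> z2" "z1 \<noteq> s" "z2 \<noteq> s" using z tt'(3) t3 by auto
  have xz: "(x,z1) \<in> ?G" "(x,z2) \<in> ?G"
    using z z12 xy' t3 unfolding link_graph_def by (auto simp: insert_commute)
  have sy: "{s,y} \<in> X" "card {s,y} = 2"
    using xy' face_subset[of "insert x (insert y {s})" "{s,y}"] by auto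
  have "(z1,z2) \<in> (?G \<inter> UNIV \<times> (- {x}))\<^sup>* \<or>
    (\<exists>c b. (z1,c) \<in> (?G \<inter> UNIV \<times> (- {x}))\<^sup>* \<and> (c,b) \<in> ?G \<and> b \<notin> - {x} \<and> b \<noteq> x)"
    using link_graph_walk_from_neighbour[OF sy xz z12(1), of "- {x}"] z by simp
  then have "(z1,z2) \<in> (?G \<inter> UNIV \<times> (- {x}))\<^sup>*" by blast
  moreover have "{y,b} \<in> ?S" if ab: "(a,b) \<in> ?G" "b \<noteq> x" for a b
  proof -
    have "b \<in> link_vertices X {s,y}" using link_graph_vertices ab(1) by blast
    then have "b \<noteq> y" "{y,b} \<in> link_edges X s" using link_vertices_pair_iff[OF xy'(3)] by simp_all
    then show "{y,b} \<in> ?S" using Fy ab(2) by (auto simp: doubleton_eq_iff)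
  qed
  then have "?G \<inter> UNIV \<times> (- {x}) \<subseteq> ?G \<inter> {(a,b). {y,b} \<in> ?S}" by blast
  ultimately have walk: "(z1,z2) \<in> (?G \<inter> {(a,b). {y,b} \<in> ?S})\<^sup>*" using rtrancl_mono by blast
  have "{y,z1} \<in> ?S"
    using link_triangle_edge[OF tt'(1), of y z1] z Fy by (auto simp: doubleton_eq_iff)
  moreover have "{y,z1} \<subseteq> t" "{y,z2} \<subseteq> t'" using z by auto
  ultimately show ?thesis
    using dual_graph_link_around_vertex[OF walk _ _ xy'(3) tt'(1) _ tt'(2)] by blast
qed

lemma dual_graph_link_remove_edge:
  assumes conn: "\<forall>t\<in>link_triangles X s. \<forall>t'\<in>link_triangles X s.
      (t,t') \<in> (dual_graph (link_triangles X s) (link_edges X s - F))\<^sup>*"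
    and xy: "(x,y) \<in> link_graph X {s}" and Fy: "\<forall>e\<in>F. y \<notin> e"
  shows "\<forall>t\<in>link_triangles X s. \<forall>t'\<in>link_triangles X s.
      (t,t') \<in> (dual_graph (link_triangles X s) (link_edges X s - insert {x,y} F))\<^sup>*"
proof (intro ballI)
  let ?D = "\<lambda>F. dual_graph (link_triangles X s) (link_edges X s - F)"
  have "?D F \<subseteq> (?D (insert {x,y} F))\<^sup>*"
  proof safe
    fix t t' assume "(t,t') \<in> ?D F"
    then have h: "t \<in> link_triangles X s" "t' \<in> link_triangles X s" "t \<noteq> t'"
      "t \<inter> t' \<in> link_edges X s - F"
      unfolding dual_graph_def by auto
    show "(t,t') \<in> (?D (insert {x,y} F))\<^sup>*"
    proof (cases "t \<inter> t' = {x,y}")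
      case True
      then show ?thesis using dual_graph_link_avoid_edge[OF xy Fy h(1-3)] by blast
    next
      case False
      then have "(t,t') \<in> ?D (insert {x,y} F)" using h unfolding dual_graph_def by auto
      then show ?thesis by blast
    qed
  qed
  then show "(t,t') \<in> (?D (insert {x,y} F))\<^sup>*"
    if "t \<in> link_triangles X s" "t' \<in> link_triangles X s" for t t'
    using conn that rtrancl_subset_rtrancl by blast
qed

text \<open>F grows like a spanning tree of the link graph, on the vertex set U.\<close>

lemma dual_graph_link_remove_tree:
  assumes "1 \<le> k" "k \<le> card (link_vertices X {s})" "{s} \<in> X"
  shows "\<exists>U F. U \<subseteq> link_vertices X {s} \<and> card U = k \<and> F \<subseteq> link_edges X s \<and>
    (\<forall>e\<in>F. e \<subseteq> U) \<and> card F + 1 = k \<and>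
    (\<forall>t\<in>link_triangles X s. \<forall>t'\<in>link_triangles X s.
      (t,t') \<in> (dual_graph (link_triangles X s) (link_edges X s - F))\<^sup>*)"
  using assms(1,2)
proof (induction k)
  case (Suc k)
  show ?case
  proof (cases "k = 0")
    case True
    have "link_vertices X {s} \<noteq> {}" using Suc.prems by auto
    then obtain x0 where "x0 \<in> link_vertices X {s}" by blast
    then show ?thesis
      using True dual_graph_link_connected by (intro exI[of _ "{x0}"] exI[of _ "{}"]) simp
  next
    case False
    then obtain U F where UF: "U \<subseteq> link_vertices X {s}" "card U = k" "F \<subseteq> link_edges X s"
      "\<forall>e\<in>F. e \<subseteq> U" "card F + 1 = k" "\<forall>t\<in>link_triangles X s. \<forall>t'\<in>link_triangles X s.
        (t,t') \<in> (dual_graph (link_triangles X s) (link_edges X s - F))\<^sup>*"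
      using Suc by auto
    have "U \<noteq> {}" "U \<noteq> link_vertices X {s}" using UF(2) Suc.prems False by auto
    then obtain a b where ab: "a \<in> U" "b \<in> link_vertices X {s}" "b \<notin> U" using UF(1) by blast
    moreover have "card {s} \<le> 2" "a \<in> link_vertices X {s}" using ab(1) UF(1) by auto
    ultimately obtain x y where xy: "(x,y) \<in> link_graph X {s}" "x \<in> U" "y \<notin> U"
      using link_graph_leaves_set[OF assms(3)] by blast
    have Fy: "\<forall>e\<in>F. y \<notin> e" using UF(4) xy(3) by auto
    have xy_edge: "{x,y} \<in> link_edges X s" using link_graph_link_edge[OF xy(1)] .
    have fin: "finite F" "finite U"
      using finite_subset[OF UF(3) finite_link_edges] finite_subset[OF UF(1) finite_link_vertices] .
    have y: "y \<in> link_vertices X {s}" using link_graph_vertices xy(1) by blast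
    have "{x,y} \<notin> F" using Fy by auto
    then have "card (insert {x,y} F) + 1 = Suc k" using fin(1) UF(5) by simp
    moreover have "card (insert y U) = Suc k" using fin(2) UF(2) xy(3) by simp
    moreover note dual_graph_link_remove_edge[OF UF(6) xy(1) Fy]
    moreover have "insert y U \<subseteq> link_vertices X {s}" "insert {x,y} F \<subseteq> link_edges X s"
      "\<forall>e\<in>insert {x,y} F. e \<subseteq> insert y U"
      using UF(1,3,4) xy(2) xy_edge y by auto
    ultimately show ?thesis by blast
  qed
qed simp

lemma card_link_edges_double_count: "card (link_edges X s) * 2 = card (link_triangles X s) * 3"
proof -
  let ?P = "{(e,t). e \<in> link_edges X s \<and> t \<in> link_triangles X s \<and> e \<subseteq> t}"
  have "?P = (SIGMA e:link_edges X s. {t\<in>link_triangles X s. e \<subseteq> t})" by auto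
  then have "card ?P = (\<Sum>e\<in>link_edges X s. card {t\<in>link_triangles X s. e \<subseteq> t})"
    using finite_link_edges finite_link_triangles by simp
  also have "\<dots> = card (link_edges X s) * 2"
    using card_link_triangles_containing by simp
  finally have by_edges: "card ?P = card (link_edges X s) * 2" .
  have "{e\<in>link_edges X s. e \<subseteq> t} = {e. e \<subseteq> t \<and> card e = 2}" if t: "t \<in> link_triangles X s" for t
  proof -
    have "insert s e \<in> X" if "e \<subseteq> t" for e
      using face_subset[of "insert s t" "insert s e"] t that unfolding link_triangles_def by blast
    then show ?thesis using t unfolding link_edges_def link_triangles_def by auto
  qed
  then have "card {e\<in>link_edges X s. e \<subseteq> t} = 3" if "t \<in> link_triangles X s" for t
    using that card_2_subsets_of_card_3 unfolding link_triangles_def by auto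
  moreover have "?P = (\<lambda>(t,e). (e,t)) ` (SIGMA t:link_triangles X s. {e\<in>link_edges X s. e \<subseteq> t})"
    by auto
  moreover have "inj_on (\<lambda>(t,e). (e,t)) (SIGMA t:link_triangles X s. {e\<in>link_edges X s. e \<subseteq> t})"
    by (auto simp: inj_on_def)
  ultimately have "card ?P = card (link_triangles X s) * 3"
    using finite_link_edges finite_link_triangles by (simp add: card_image)
  then show ?thesis using by_edges by simp
qed

text \<open>The dual graph of the link stays connected after removing a spanning tree of the link
  graph, so the remaining edges are at least as many as the triangles minus one; as every edge
  lies in two triangles this gives the lower bound.\<close>

lemma link_edges_lower_bound:
  assumes "{s} \<in> X" shows "3 * card (link_vertices X {s}) \<le> card (link_edges X s) + 6"
proof -
  obtain \<sigma> where \<sigma>: "\<sigma> \<in> X" "card \<sigma> = 4" "s \<in> \<sigma>" using face_in_facet[OF assms] by auto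
  then have tri: "\<sigma> - {s} \<in> link_triangles X s"
    using finite_face unfolding link_triangles_def by (auto simp: insert_absorb)
  then have "card (\<sigma> - {s}) = 3" unfolding link_triangles_def by simp
  then have "\<sigma> - {s} \<noteq> {}" using card_gt_0_iff[of "\<sigma> - {s}"] by linarith
  then obtain y where "y \<in> \<sigma> - {s}" by blast
  then have "y \<in> link_vertices X {s}"
    using \<sigma> face_subset[of \<sigma> "{y,s}"] unfolding link_vertices_def by (auto simp: insert_commute)
  then have "1 \<le> card (link_vertices X {s})"
    using finite_link_vertices by (metis One_nat_def Suc_leI card_gt_0_iff empty_iff)
  then obtain F where F: "F \<subseteq> link_edges X s" "card F + 1 = card (link_vertices X {s})"
    "\<forall>t\<in>link_triangles X s. \<forall>t'\<in>link_triangles X s.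
      (t,t') \<in> (dual_graph (link_triangles X s) (link_edges X s - F))\<^sup>*"
    using dual_graph_link_remove_tree[OF _ order_refl assms] by blast
  have "card (link_triangles X s) \<le> card (link_edges X s - F) + 1"
    using card_le_Suc_card_ridges_if_dual_connected[OF finite_link_triangles _ _ F(3)] tri
      finite_link_edges card_link_triangles_containing by auto
  moreover have "card (link_edges X s - F) + card F = card (link_edges X s)"
    using card_Diff_subset[OF finite_subset[OF F(1) finite_link_edges] F(1)]
      card_mono[OF finite_link_edges F(1)] by simp
  ultimately show ?thesis using F(2) card_link_edges_double_count[of s] by linarith
qed

end

section \<open>Tight vertex sets and a vertex of degree four\<close>

context pseudomanifold3
begin

lemma facet_psubset_vertices:
  assumes \<sigma>: "\<sigma> \<in> X" "card \<sigma> = 4" shows "\<sigma> \<subset> vertices X"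
proof -
  have "\<sigma> \<subseteq> vertices X" using \<sigma> unfolding vertices_def by auto
  moreover have "\<sigma> \<noteq> vertices X"
  proof
    assume eq: "\<sigma> = vertices X"
    obtain x where x: "x \<in> \<sigma>" using \<sigma>(2) by (metis card.empty ex_in_conv zero_neq_numeral)
    then have \<tau>: "\<sigma> - {x} \<in> X" "card (\<sigma> - {x}) = 3"
      using face_subset[OF \<sigma>(1)] \<sigma>(2) finite_face[OF \<sigma>(1)] by auto
    have "{\<rho>\<in>X. card \<rho> = 4 \<and> \<sigma> - {x} \<subseteq> \<rho>} \<subseteq> {\<sigma>}"
    proof
      fix \<rho> assume \<rho>: "\<rho> \<in> {\<rho>\<in>X. card \<rho> = 4 \<and> \<sigma> - {x} \<subseteq> \<rho>}"
      then have "\<rho> \<subseteq> \<sigma>" using eq unfolding vertices_def by auto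
      then show "\<rho> \<in> {\<sigma>}" using card_seteq[OF finite_face[OF \<sigma>(1)]] \<rho> \<sigma>(2) by auto
    qed
    then have "card {\<rho>\<in>X. card \<rho> = 4 \<and> \<sigma> - {x} \<subseteq> \<rho>} \<le> 1"
      using card_mono[of "{\<sigma>}"] by fastforce
    then show False using card_facets_containing_ridge[OF \<tau>] by simp
  qed
  ultimately show ?thesis by blast
qed

lemma closed_star_subset:
  assumes "\<rho> \<in> X" "s \<in> \<rho>" shows "\<rho> \<subseteq> insert s (link_vertices X {s})"
proof
  fix z assume "z \<in> \<rho>"
  then have "{z,s} \<in> X" using face_subset[OF assms(1)] assms(2) by auto
  then show "z \<in> insert s (link_vertices X {s})" unfolding link_vertices_def by auto
qed

lemma facet_vertex_with_neighbour_outside: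
  assumes B: "B \<subset> vertices X" and \<sigma>: "\<sigma> \<in> X" "card \<sigma> = 4" "\<sigma> \<subseteq> B"
  obtains s \<rho> where "\<rho> \<in> X" "card \<rho> = 4" "\<rho> \<subseteq> B" "s \<in> \<rho>"
    "\<not> insert s (link_vertices X {s}) \<subseteq> B"
proof (rule ccontr)
  assume H: "\<not> thesis"
  let ?Q = "{x. \<exists>\<rho>\<in>X. card \<rho> = 4 \<and> \<rho> \<subseteq> B \<and> x \<in> \<rho>}"
  \<comment> \<open>Otherwise the vertices of facets inside B are closed under adjacency.\<close>
  obtain x0 where x0: "x0 \<in> \<sigma>" using \<sigma>(2) by (metis card.empty ex_in_conv zero_neq_numeral)
  have "vertices X \<subseteq> ?Q"
  proof
    fix v assume v: "v \<in> vertices X"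
    have "x0 \<in> vertices X" using x0 \<sigma>(3) B by auto
    then have "(x0,v) \<in> (link_graph X {})\<^sup>*"
      using link_graph_connected[OF empty_face] v link_vertices_empty by simp
    then show "v \<in> ?Q"
    proof (rule rtrancl_stays_in_closed_set)
      show "x0 \<in> ?Q" using \<sigma> x0 by auto
    next
      fix x y assume xy: "(x,y) \<in> link_graph X {}" "x \<in> ?Q"
      then obtain \<rho>x where "\<rho>x \<in> X" "card \<rho>x = 4" "\<rho>x \<subseteq> B" "x \<in> \<rho>x" by blast
      then have "insert x (link_vertices X {x}) \<subseteq> B" using H that by blast
      moreover obtain \<rho> where \<rho>: "\<rho> \<in> X" "card \<rho> = 4" "{x,y} \<subseteq> \<rho>"
        using face_in_facet[of "{x,y}"] xy(1) unfolding link_graph_def by auto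
      ultimately show "y \<in> ?Q" using closed_star_subset[OF \<rho>(1)] by blast
    qed
  qed
  then show False using B by blast
qed

lemma link_triangles_crossing:
  assumes t0: "t0 \<in> link_triangles X s" "t0 \<subseteq> B" and t1: "t1 \<in> link_triangles X s" "\<not> t1 \<subseteq> B"
  obtains p q r u where "insert s {p,q,r} \<in> X" "insert s {p,q,u} \<in> X" "p \<noteq> q"
    "r \<notin> {p,q}" "u \<notin> {p,q}" "s \<notin> {p,q,r,u}" "{p,q,r} \<subseteq> B" "u \<notin> B"
proof -
  have "\<exists>ta tb. (ta,tb) \<in> dual_graph (link_triangles X s) (link_edges X s) \<and>
      ta \<in> {t. t \<subseteq> B} \<and> tb \<notin> {t. t \<subseteq> B}"
    by (rule rtrancl_leaves_set[OF dual_graph_link_connected[OF t0(1) t1(1)]]) (use t0 t1 in simp_all)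
  then obtain ta tb where tab: "(ta,tb) \<in> dual_graph (link_triangles X s) (link_edges X s)"
    "ta \<subseteq> B" "\<not> tb \<subseteq> B"
    by blast
  then have ta: "card ta = 3" "s \<notin> ta" "insert s ta \<in> X" and tb: "card tb = 3" "s \<notin> tb" "insert s tb \<in> X"
    and "card (ta \<inter> tb) = 2"
    unfolding dual_graph_def link_triangles_def link_edges_def by auto
  then obtain p q where pq: "ta \<inter> tb = {p,q}" "p \<noteq> q" by (meson card_2_iff)
  have pq_sub: "{p,q} \<subseteq> ta" "{p,q} \<subseteq> tb" using pq(1) by blast+
  have "card (ta - {p,q}) = 1" "card (tb - {p,q}) = 1"
    using card_Diff_subset[OF _ pq_sub(1)] card_Diff_subset[OF _ pq_sub(2)] ta(1) tb(1) pq(2) by simp_all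
  then obtain r u where "ta - {p,q} = {r}" "tb - {p,q} = {u}" by (meson card_1_singletonE)
  then have "ta = {p,q,r}" "tb = {p,q,u}" "r \<notin> {p,q}" "u \<notin> {p,q}" using pq_sub by auto
  then show ?thesis by (intro that) (use ta tb pq(2) tab(2,3) in auto)
qed

text \<open>Take adjacent triangles {p,q,r} \<subseteq> B and {p,q,u} with u \<notin> B in the link of s. The link of the
  edge {p,q} is a cycle through r, s, u; walking along it from u outside B one meets a vertex c
  adjacent to some b \<in> B other than s, and c is adjacent to p, q, b and s.\<close>

lemma vertex_with_four_neighbours:
  assumes \<sigma>: "\<sigma> \<in> X" "card \<sigma> = 4" "\<sigma> \<subseteq> B" "s \<in> \<sigma>"
    and cover: "vertices X \<subseteq> insert s (link_vertices X {s}) \<union> B" and out: "\<not> vertices X \<subseteq> B"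
  obtains c N where "c \<in> vertices X" "c \<notin> B" "N \<subseteq> B" "card N = 4" "\<forall>b\<in>N. {c,b} \<in> X"
proof -
  have s: "s \<in> B" using \<sigma> by auto
  obtain w where w: "w \<in> vertices X" "w \<notin> B" using out by auto
  then have "w \<in> link_vertices X {s}" using cover s by auto
  then obtain \<rho> where \<rho>: "\<rho> \<in> X" "card \<rho> = 4" "{w,s} \<subseteq> \<rho>"
    using face_in_facet[of "{w,s}"] unfolding link_vertices_def by (auto simp: insert_commute)
  have "\<sigma> - {s} \<in> link_triangles X s" "\<sigma> - {s} \<subseteq> B"
    "\<rho> - {s} \<in> link_triangles X s" "\<not> \<rho> - {s} \<subseteq> B"
    using \<sigma> \<rho> finite_face w s unfolding link_triangles_def by (auto simp: insert_absorb)
  then obtain p q r u where pqru: "insert s {p,q,r} \<in> X" "insert s {p,q,u} \<in> X" "p \<noteq> q"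
    "r \<notin> {p,q}" "u \<notin> {p,q}" "s \<notin> {p,q,r,u}" "{p,q,r} \<subseteq> B" "u \<notin> B"
    by (rule link_triangles_crossing)
  let ?G = "link_graph X {p,q}"
  have G: "(s,r) \<in> ?G" "(s,u) \<in> ?G"
    using pqru unfolding link_graph_def by (auto simp: insert_commute)
  have pq: "{p,q} \<in> X" "card {p,q} = 2"
    using pqru(1,3) face_subset[of "insert s {p,q,r}" "{p,q}"] by auto
  have "u \<noteq> r" using pqru(7,8) by auto
  have outside: "y \<notin> B" if "(u,y) \<in> (?G \<inter> UNIV \<times> (- B))\<^sup>*" for y
    using rtrancl_stays_in_closed_set[OF that, of "- B"] pqru(8) by blast
  have "(u,r) \<in> (?G \<inter> UNIV \<times> (- B))\<^sup>* \<or>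
      (\<exists>c b. (u,c) \<in> (?G \<inter> UNIV \<times> (- B))\<^sup>* \<and> (c,b) \<in> ?G \<and> b \<notin> - B \<and> b \<noteq> s)"
    using link_graph_walk_from_neighbour[OF pq G(2,1) \<open>u \<noteq> r\<close>, of "- B"] s pqru(8) by simp
  then obtain c b where cb: "(c,b) \<in> ?G" "c \<notin> B" "b \<in> B" "b \<noteq> s"
    using outside pqru(7) by blast
  then have cb': "c \<noteq> b" "b \<notin> {p,q}" "insert c (insert b {p,q}) \<in> X"
    unfolding link_graph_def by auto
  then have c: "c \<in> vertices X" unfolding vertices_def by blast
  then have "{c,s} \<in> X" using cover cb(2) s unfolding link_vertices_def by (auto simp: insert_commute)
  moreover have "{c,p} \<in> X" "{c,q} \<in> X" "{c,b} \<in> X" using face_subset[OF cb'(3)] by auto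
  moreover have "card {p,q,b,s} = 4" using pqru(3,6) cb'(2) cb(4) by auto
  moreover have "{p,q,b,s} \<subseteq> B" using pqru(7) cb(3) s by auto
  ultimately show ?thesis using that c cb(2) by blast
qed

end

definition spanned_edges :: "'a set set \<Rightarrow> 'a set \<Rightarrow> nat" where
  "spanned_edges X B = card {e \<in> edges X. e \<subseteq> B}"

text \<open>For a minimally 4-rigid complex, rigidity applied to the complement of a vertex set B
  containing a facet says that B spans at most 4 |B| - 10 edges; B is tight if equality holds.\<close>

definition tight :: "'a set set \<Rightarrow> 'a set \<Rightarrow> bool" where
  "tight X B \<longleftrightarrow> B \<subseteq> vertices X \<and> (\<exists>\<sigma>\<in>X. card \<sigma> = 4 \<and> \<sigma> \<subseteq> B) \<and>
     spanned_edges X B + 10 = 4 * card B"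

locale min_rigid_pseudomanifold3 = pseudomanifold3 +
  assumes minimally_rigid: "minimally_rigid 4 3 X"
begin

lemma finite_edges: "finite (edges X)"
  unfolding edges_def using finite_complex by simp

lemma edge_subset_vertices: "e \<in> edges X \<Longrightarrow> e \<subseteq> vertices X"
  unfolding edges_def vertices_def by auto

lemma card_edges: "card (edges X) + 10 = 4 * card (vertices X)"
proof -
  have "((3 + 1::nat) choose 2) = 6" by (simp add: numeral_eq_Suc)
  then have "int (card (edges X)) = int (card (vertices X)) * 4 - 10"
    using minimally_rigid unfolding minimally_rigid_def by simp
  then show ?thesis by linarith
qed

lemma rigidity:
  assumes "A \<subseteq> vertices X" "\<sigma> \<in> X" "card \<sigma> = 4" "A \<inter> \<sigma> = {}"
  shows "4 * card A \<le> card {e \<in> edges X. e \<inter> A \<noteq> {}}"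
proof -
  have "rigid 4 3 X" using minimally_rigid unfolding minimally_rigid_def by simp
  then show ?thesis using assms unfolding rigid_def by auto
qed

lemma card_edges_split:
  assumes "B \<subseteq> vertices X"
  shows "card (edges X) = card {e \<in> edges X. e \<inter> (vertices X - B) \<noteq> {}} + spanned_edges X B"
proof -
  have "edges X = {e \<in> edges X. e \<inter> (vertices X - B) \<noteq> {}} \<union> {e \<in> edges X. e \<subseteq> B}"
    using edge_subset_vertices by blast
  then show ?thesis
    unfolding spanned_edges_def using finite_edges
    by (subst (1) \<open>edges X = _\<close>, intro card_Un_disjoint) auto
qed

lemma spanned_edges_le:
  assumes B: "B \<subseteq> vertices X" and \<sigma>: "\<sigma> \<in> X" "card \<sigma> = 4" "\<sigma> \<subseteq> B"
  shows "spanned_edges X B + 10 \<le> 4 * card B"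
proof -
  have "4 * card (vertices X - B) \<le> card {e \<in> edges X. e \<inter> (vertices X - B) \<noteq> {}}"
    by (rule rigidity[OF _ \<sigma>(1,2)]) (use \<sigma>(3) in auto)
  moreover have "card (vertices X - B) + card B = card (vertices X)"
    using card_Diff_subset[OF finite_subset[OF B finite_vertices] B] card_mono[OF finite_vertices B]
    by simp
  ultimately show ?thesis using card_edges_split[OF B] card_edges by linarith
qed

lemma tight_facet: assumes "\<sigma> \<in> X" "card \<sigma> = 4" shows "tight X \<sigma>"
proof -
  have "{e \<in> edges X. e \<subseteq> \<sigma>} = {e. e \<subseteq> \<sigma> \<and> card e = 2}"
    unfolding edges_def using face_subset assms(1) by auto
  then have "spanned_edges X \<sigma> = 6"
    unfolding spanned_edges_def using n_subsets[OF finite_face[OF assms(1)], of 2] assms(2)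
    by (simp add: numeral_eq_Suc)
  then show ?thesis unfolding tight_def using assms unfolding vertices_def by auto
qed

text \<open>Spanned edge counts are supermodular, and the intersection obeys the upper bound.\<close>

lemma tight_union:
  assumes S: "tight X S" and T: "tight X T" and \<sigma>: "\<sigma> \<in> X" "card \<sigma> = 4" "\<sigma> \<subseteq> S \<inter> T"
  shows "tight X (S \<union> T)"
proof -
  have V: "S \<subseteq> vertices X" "T \<subseteq> vertices X" using S T unfolding tight_def by auto
  let ?E = "\<lambda>B. {e \<in> edges X. e \<subseteq> B}"
  have fE: "finite (?E B)" for B using finite_edges by auto
  have "card (?E S \<union> ?E T) + card (?E (S \<inter> T)) = card (?E S) + card (?E T)"
  proof -
    have "?E S \<inter> ?E T = ?E (S \<inter> T)" by blast
    then show ?thesis using card_Un_Int[OF fE fE] by simp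
  qed
  moreover have "card (?E S \<union> ?E T) \<le> card (?E (S \<union> T))" by (rule card_mono[OF fE]) blast
  moreover have "card (S \<union> T) + card (S \<inter> T) = card S + card T"
    using card_Un_Int[OF finite_subset[OF V(1) finite_vertices] finite_subset[OF V(2) finite_vertices]]
    by simp
  moreover have "spanned_edges X (S \<inter> T) + 10 \<le> 4 * card (S \<inter> T)"
    by (rule spanned_edges_le[OF _ \<sigma>(1,2)]) (use V \<sigma>(3) in auto)
  moreover have "spanned_edges X (S \<union> T) + 10 \<le> 4 * card (S \<union> T)"
    by (rule spanned_edges_le[OF _ \<sigma>(1,2)]) (use V \<sigma>(3) in auto)
  ultimately have "spanned_edges X (S \<union> T) + 10 = 4 * card (S \<union> T)"
    using S T unfolding tight_def spanned_edges_def by linarith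
  then show ?thesis unfolding tight_def using V \<sigma> by blast
qed

lemma edges_at_vertex: "{e \<in> edges X. c \<in> e} = (\<lambda>y. {c,y}) ` link_vertices X {c}"
proof (intro set_eqI iffI)
  fix e assume e: "e \<in> {e \<in> edges X. c \<in> e}"
  then have "card (e - {c}) = 1" unfolding edges_def by simp
  then obtain y where "e - {c} = {y}" by (rule card_1_singletonE)
  then have "e = {c,y}" "y \<noteq> c" using e by auto
  then show "e \<in> (\<lambda>y. {c,y}) ` link_vertices X {c}"
    using e unfolding edges_def link_vertices_def by (auto simp: insert_commute)
qed (auto simp: link_vertices_def edges_def insert_commute)

lemma card_edges_at_vertex: "card {e \<in> edges X. c \<in> e} = card (link_vertices X {c})"
  unfolding edges_at_vertex
  by (rule card_image) (auto simp: inj_on_def link_vertices_def doubleton_eq_iff)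

lemma tight_closed_star:
  assumes s: "{s} \<in> X" shows "tight X (insert s (link_vertices X {s}))"
proof -
  let ?N = "insert s (link_vertices X {s})"
  have NV: "?N \<subseteq> vertices X" using s unfolding link_vertices_def vertices_def by auto
  obtain \<sigma> where \<sigma>: "\<sigma> \<in> X" "card \<sigma> = 4" "s \<in> \<sigma>" using face_in_facet[OF s] by auto
  then have \<sigma>N: "\<sigma> \<subseteq> ?N" using closed_star_subset by blast
  let ?A = "(\<lambda>y. {s,y}) ` link_vertices X {s}"
  have "?A \<union> link_edges X s \<subseteq> {e \<in> edges X. e \<subseteq> ?N}"
  proof -
    have "e \<in> X" "e \<subseteq> ?N" if "e \<in> link_edges X s" for e
      using that face_subset[of "insert s e" e] closed_star_subset[of "insert s e" s]
      unfolding link_edges_def by auto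
    then show ?thesis
      unfolding edges_def link_vertices_def link_edges_def by (auto simp: insert_commute)
  qed
  moreover have "?A \<inter> link_edges X s = {}" unfolding link_edges_def by auto
  moreover have "card ?A = card (link_vertices X {s})"
    by (rule card_image) (auto simp: inj_on_def link_vertices_def doubleton_eq_iff)
  ultimately have "card (link_vertices X {s}) + card (link_edges X s) \<le> spanned_edges X ?N"
    unfolding spanned_edges_def
    using card_Un_disjoint[OF finite_imageI[OF finite_link_vertices] finite_link_edges]
      card_mono[of "{e \<in> edges X. e \<subseteq> ?N}" "?A \<union> link_edges X s"] finite_edges by simp
  moreover have "s \<notin> link_vertices X {s}" unfolding link_vertices_def by simp
  then have "card ?N = Suc (card (link_vertices X {s}))" using finite_link_vertices by simp
  moreover note link_edges_lower_bound[OF s] spanned_edges_le[OF NV \<sigma>(1,2) \<sigma>N]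
  ultimately have "spanned_edges X ?N + 10 = 4 * card ?N" by linarith
  then show ?thesis unfolding tight_def using NV \<sigma> \<sigma>N by blast
qed

lemma tight_insert:
  assumes B: "tight X B" and c: "c \<in> vertices X" "c \<notin> B"
    and N: "N \<subseteq> B" "card N = 4" "\<forall>b\<in>N. {c,b} \<in> X"
  shows "tight X (insert c B)"
proof -
  obtain \<sigma> where \<sigma>: "\<sigma> \<in> X" "card \<sigma> = 4" "\<sigma> \<subseteq> B" using B unfolding tight_def by blast
  have BV: "insert c B \<subseteq> vertices X" using B c unfolding tight_def by auto
  have cN: "c \<notin> N" using N(1) c(2) by auto
  have "{e \<in> edges X. e \<subseteq> B} \<union> (\<lambda>b. {c,b}) ` N \<subseteq> {e \<in> edges X. e \<subseteq> insert c B}"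
    using N cN unfolding edges_def by (auto simp: card_insert_if)
  moreover have "{e \<in> edges X. e \<subseteq> B} \<inter> (\<lambda>b. {c,b}) ` N = {}" using c(2) by auto
  moreover have "card ((\<lambda>b. {c,b}) ` N) = 4"
    using N(2) cN card_image[of "\<lambda>b. {c,b}" N] by (auto simp: inj_on_def doubleton_eq_iff)
  moreover have "finite N" using N(2) by (intro card_ge_0_finite) simp
  ultimately have "spanned_edges X B + 4 \<le> spanned_edges X (insert c B)"
    unfolding spanned_edges_def using finite_edges
      card_mono[of "{e \<in> edges X. e \<subseteq> insert c B}" "{e \<in> edges X. e \<subseteq> B} \<union> (\<lambda>b. {c,b}) ` N"]
      card_Un_disjoint[of "{e \<in> edges X. e \<subseteq> B}" "(\<lambda>b. {c,b}) ` N"]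
    by simp
  moreover have "card (insert c B) = Suc (card B)"
    using c(2) finite_subset[OF _ finite_vertices] BV by simp
  moreover have "spanned_edges X (insert c B) + 10 \<le> 4 * card (insert c B)"
    using spanned_edges_le[OF BV \<sigma>(1,2)] \<sigma>(3) by blast
  ultimately have "spanned_edges X (insert c B) + 10 = 4 * card (insert c B)"
    using B unfolding tight_def by linarith
  then show ?thesis unfolding tight_def using BV \<sigma> by blast
qed

lemma card_link_vertices_if_tight_complement:
  assumes B: "tight X B" and c: "vertices X = insert c B" "c \<notin> B"
  shows "card (link_vertices X {c}) = 4"
proof -
  have "{e \<in> edges X. e \<inter> (vertices X - B) \<noteq> {}} = {e \<in> edges X. c \<in> e}" using c by auto
  then have "card (edges X) = card (link_vertices X {c}) + spanned_edges X B"
    using card_edges_split[of B] card_edges_at_vertex c by auto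
  moreover have "card (vertices X) = Suc (card B)"
    using c finite_vertices by (metis card_insert_disjoint finite_insert)
  ultimately show ?thesis using card_edges B unfolding tight_def by linarith
qed

text \<open>A maximal tight proper vertex set misses exactly one vertex, which has degree four.\<close>

lemma degree_four_vertex:
  obtains u where "{u} \<in> X" "card (link_vertices X {u}) = 4"
proof -
  let ?V = "vertices X"
  obtain \<sigma>0 where \<sigma>0: "\<sigma>0 \<in> X" "card \<sigma>0 = 4" using face_in_facet[OF empty_face] by blast
  let ?BB = "{B. tight X B \<and> B \<noteq> ?V}"
  have "?BB \<subseteq> Pow ?V" unfolding tight_def by blast
  then have "finite ?BB" using finite_vertices finite_subset by blast
  moreover have "\<sigma>0 \<in> ?BB" using tight_facet[OF \<sigma>0] facet_psubset_vertices[OF \<sigma>0] by blast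
  ultimately obtain B where "B \<in> ?BB" and maximal: "\<forall>B'\<in>?BB. B \<subseteq> B' \<longrightarrow> B = B'"
    using finite_has_maximal2[of ?BB \<sigma>0] by blast
  then have B: "tight X B" "B \<noteq> ?V" by auto
  have max: "B' = ?V" if "tight X B'" "B \<subseteq> B'" "B' \<noteq> B" for B'
    using maximal that by auto
  have BV: "B \<subset> ?V" using B unfolding tight_def by auto
  obtain \<sigma> where \<sigma>: "\<sigma> \<in> X" "card \<sigma> = 4" "\<sigma> \<subseteq> B" using B(1) unfolding tight_def by blast
  obtain s \<sigma>s where \<sigma>s: "\<sigma>s \<in> X" "card \<sigma>s = 4" "\<sigma>s \<subseteq> B" "s \<in> \<sigma>s"
    and leaves: "\<not> insert s (link_vertices X {s}) \<subseteq> B"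
    using facet_vertex_with_neighbour_outside[OF BV \<sigma>] .
  have "{s} \<in> X" using face_subset[OF \<sigma>s(1)] \<sigma>s(4) by auto
  then have "tight X (insert s (link_vertices X {s}) \<union> B)"
    using tight_union[OF tight_closed_star B(1) \<sigma>s(1,2)] \<sigma>s(3) closed_star_subset[OF \<sigma>s(1,4)]
    by blast
  then have cover: "?V \<subseteq> insert s (link_vertices X {s}) \<union> B"
    using max[of "insert s (link_vertices X {s}) \<union> B"] leaves by auto
  obtain c N where c: "c \<in> ?V" "c \<notin> B" and N: "N \<subseteq> B" "card N = 4" "\<forall>b\<in>N. {c,b} \<in> X"
    using vertex_with_four_neighbours[OF \<sigma>s cover] BV by auto
  have "insert c B = ?V" using max[OF tight_insert[OF B(1) c N]] c(2) by auto
  then have "card (link_vertices X {c}) = 4"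
    using card_link_vertices_if_tight_complement[OF B(1) _ c(2)] by simp
  moreover have "{c} \<in> X" using c(1) vertex_iff by simp
  ultimately show ?thesis using that by blast
qed

end

section \<open>Removing a vertex of degree four\<close>

context pseudomanifold3
begin

text \<open>Links of faces of the boundary of a 4-simplex S cannot leave S: for a triangle this is
  because its link has only two vertices, and for smaller faces an edge of the link leaving S
  would give a larger face of the boundary with a link vertex outside S.\<close>

lemma link_vertex_if_boundary:
  assumes S: "finite S" "card S = 5" "\<And>\<rho>. \<rho> \<subset> S \<Longrightarrow> \<rho> \<in> X"
    and \<alpha>: "\<alpha> \<subseteq> S" "card \<alpha> \<le> 3" and a: "a \<in> S - \<alpha>"
  shows "a \<in> link_vertices X \<alpha>"
proof -
  have "card (insert a \<alpha>) \<le> 4" using \<alpha> finite_subset[OF \<alpha>(1) S(1)] by (simp add: card_insert_if)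
  then have "insert a \<alpha> \<subset> S" using a \<alpha>(1) S(2) by auto
  then show ?thesis using S(3) a unfolding link_vertices_def by simp
qed

lemma link_vertices_subset_if_boundary:
  assumes S: "finite S" "card S = 5" "\<And>\<rho>. \<rho> \<subset> S \<Longrightarrow> \<rho> \<in> X"
    and \<alpha>: "\<alpha> \<subseteq> S" "card \<alpha> \<le> 3"
  shows "link_vertices X \<alpha> \<subseteq> S"
  using \<alpha>
proof (induction "3 - card \<alpha>" arbitrary: \<alpha>)
  case 0
  then have c\<alpha>: "card \<alpha> = 3" by simp
  have "\<alpha> \<in> X" using S 0 c\<alpha> by (intro S(3)) auto
  then have lv: "card (link_vertices X \<alpha>) = 2" using card_link_vertices_ridge c\<alpha> by simp
  have "S - \<alpha> \<subseteq> link_vertices X \<alpha>" using link_vertex_if_boundary[OF S 0(2,3)] by blast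
  moreover have "card (S - \<alpha>) = 2" using card_Diff_subset[OF finite_subset[OF 0(2) S(1)] 0(2)] S(2) c\<alpha> by simp
  ultimately have "S - \<alpha> = link_vertices X \<alpha>"
    using card_seteq[OF finite_link_vertices] lv by (metis order_refl)
  then show ?case by blast
next
  case (Suc n)
  have fin\<alpha>: "finite \<alpha>" using finite_subset[OF Suc(3) S(1)] .
  have \<alpha>X: "\<alpha> \<in> X" using Suc(3,4) S(2) by (intro S(3)) auto
  show ?case
  proof (rule ccontr)
    assume "\<not> ?case"
    then obtain w where w: "w \<in> link_vertices X \<alpha>" "w \<notin> S" by blast
    have "\<not> S \<subseteq> \<alpha>" using card_mono[OF fin\<alpha>, of S] Suc(4) S(2) by auto
    then obtain a where a: "a \<in> S - \<alpha>" by blast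
    then have "a \<in> link_vertices X \<alpha>" using link_vertex_if_boundary[OF S Suc(3,4)] by blast
    moreover have "card \<alpha> \<le> 2" using Suc(2) by simp
    ultimately obtain y w' where yw: "(y,w') \<in> link_graph X \<alpha>" "y \<in> S" "w' \<notin> S"
      using link_graph_leaves_set[OF \<alpha>X _ _ _ w] a by blast
    then have y: "y \<notin> \<alpha>" "w' \<in> link_vertices X (insert y \<alpha>)"
      unfolding link_graph_def link_vertices_def by (auto simp: insert_commute)
    have "card (insert y \<alpha>) = Suc (card \<alpha>)" using y(1) fin\<alpha> by simp
    then have "link_vertices X (insert y \<alpha>) \<subseteq> S"
      using Suc(1)[of "insert y \<alpha>"] Suc(2,3) \<open>card \<alpha> \<le> 2\<close> yw(2) by simp
    then show False using y(2) yw(3) by blast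
  qed
qed

lemma eq_standard_sphere_if_boundary:
  assumes S: "finite S" "card S = 5" "\<And>\<rho>. \<rho> \<subset> S \<Longrightarrow> \<rho> \<in> X"
  shows "X = standard_sphere S"
proof (intro set_eqI iffI)
  fix \<rho> assume \<rho>: "\<rho> \<in> X"
  have "vertices X \<subseteq> S"
    using link_vertices_subset_if_boundary[OF S, of "{}"] link_vertices_empty by simp
  then have "\<rho> \<subseteq> S" using \<rho> unfolding vertices_def by auto
  moreover have "\<rho> \<noteq> S" using card_face_le[OF \<rho>] S(2) by auto
  ultimately show "\<rho> \<in> standard_sphere S" unfolding standard_sphere_def by auto
qed (use S(3) in \<open>simp add: standard_sphere_def\<close>)

end

text \<open>The link of u turns out to be the boundary of the tetrahedron \<sigma> on its four neighbours.\<close>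

locale degree_four_vertex = min_rigid_pseudomanifold3 +
  fixes u
  assumes vertex: "{u} \<in> X" and degree: "card (link_vertices X {u}) = 4"
begin

abbreviation "\<sigma> \<equiv> link_vertices X {u}"

lemma u_notin: "u \<notin> \<sigma>" unfolding link_vertices_def by auto

lemma finite_\<sigma>: "finite \<sigma>" using finite_link_vertices .

lemma face_through_u: assumes "\<rho> \<in> X" "u \<in> \<rho>" shows "\<rho> - {u} \<subseteq> \<sigma>"
  using closed_star_subset[OF assms] by blast

lemma insert_u_triangle: assumes t: "\<tau> \<subseteq> \<sigma>" "card \<tau> = 3" shows "insert u \<tau> \<in> X"
proof -
  obtain \<rho>0 where \<rho>0: "\<rho>0 \<in> X" "card \<rho>0 = 4" "u \<in> \<rho>0" using face_in_facet[OF vertex] by auto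
  let ?t0 = "\<rho>0 - {u}"
  have t0: "?t0 \<subseteq> \<sigma>" "card ?t0 = 3" using face_through_u \<rho>0 finite_face by auto
  show ?thesis
  proof (cases "\<tau> = ?t0")
    case True then show ?thesis using \<rho>0 by (simp add: insert_absorb)
  next
    case False
    have "card (\<sigma> - ?t0) = 1" using card_Diff_subset[OF finite_subset[OF t0(1) finite_\<sigma>] t0(1)] t0(2) degree by simp
    then obtain d where d: "\<sigma> - ?t0 = {d}" using card_1_singletonE by blast
    have d\<tau>: "d \<in> \<tau>"
    proof (rule ccontr)
      assume "d \<notin> \<tau>"
      then have "\<tau> \<subseteq> ?t0" using t(1) d by auto
      then show False using card_seteq[OF finite_subset[OF t0(1) finite_\<sigma>]] t(2) t0(2) False by simp
    qed
    let ?e = "\<tau> - {d}"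
    have e: "card ?e = 2" "?e \<subseteq> ?t0" "u \<notin> ?e"
      using t d d\<tau> u_notin finite_subset[OF t(1) finite_\<sigma>] by auto
    have ueX: "insert u ?e \<in> X" by (rule face_subset[OF \<rho>0(1)]) (use e(2) \<rho>0(3) in auto)
    have cue: "card (insert u ?e) = 3" using e finite_subset[OF t(1) finite_\<sigma>] by simp
    \<comment> \<open>The link of the triangle {u} \<union> e has two vertices, both among the two of \<sigma> - e.\<close>
    have "link_vertices X (insert u ?e) \<subseteq> \<sigma> - ?e"
      using face_through_u unfolding link_vertices_def by blast
    moreover have "card (\<sigma> - ?e) = 2"
      using card_Diff_subset[OF _ e(2)[THEN order_trans, OF t0(1)]] e(1) degree finite_subset[OF t(1) finite_\<sigma>] by simp
    ultimately have "link_vertices X (insert u ?e) = \<sigma> - ?e"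
      using card_seteq[of "\<sigma> - ?e"] card_link_vertices_ridge[OF ueX cue] finite_\<sigma> by simp
    moreover have "d \<in> \<sigma> - ?e" using d by auto
    ultimately have "insert d (insert u ?e) \<in> X" unfolding link_vertices_def by auto
    moreover have "insert d (insert u ?e) = insert u \<tau>" using d\<tau> by auto
    ultimately show ?thesis by simp
  qed
qed

lemma insert_u_proper: assumes "\<rho> \<subset> \<sigma>" shows "insert u \<rho> \<in> X"
proof -
  obtain z where z: "z \<in> \<sigma>" "z \<notin> \<rho>" using assms by auto
  have "card (\<sigma> - {z}) = 3" using z degree finite_\<sigma> by auto
  then have "insert u (\<sigma> - {z}) \<in> X" using insert_u_triangle by auto
  moreover have "insert u \<rho> \<subseteq> insert u (\<sigma> - {z})" using assms z by auto
  ultimately show ?thesis using face_subset by blast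
qed

lemma faces_through_u: "{\<rho>\<in>X. u \<in> \<rho>} = {insert u \<tau> |\<tau>. \<tau> \<subset> \<sigma>}"
proof (intro set_eqI iffI)
  fix \<rho> assume \<rho>: "\<rho> \<in> {\<rho>\<in>X. u \<in> \<rho>}"
  then have "\<rho> - {u} \<subseteq> \<sigma>" "\<rho> = insert u (\<rho> - {u})" using face_through_u by auto
  moreover have "\<rho> - {u} \<noteq> \<sigma>"
  proof
    assume "\<rho> - {u} = \<sigma>"
    then have "\<rho> = insert u \<sigma>" using \<rho> by blast
    then show False using card_face_le[of \<rho>] \<rho> degree u_notin finite_\<sigma> by simp
  qed
  ultimately show "\<rho> \<in> {insert u \<tau> |\<tau>. \<tau> \<subset> \<sigma>}" by blast
qed (use insert_u_proper in auto)

lemma eq_standard_sphere_if_link_face: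
  assumes "\<sigma> \<in> X" shows "X = standard_sphere (insert u \<sigma>)"
proof (rule eq_standard_sphere_if_boundary)
  show "finite (insert u \<sigma>)" "card (insert u \<sigma>) = 5" using degree u_notin finite_\<sigma> by simp_all
  fix \<rho> assume \<rho>: "\<rho> \<subset> insert u \<sigma>"
  show "\<rho> \<in> X"
  proof (cases "u \<in> \<rho>")
    case True
    then have "\<rho> - {u} \<subset> \<sigma>" using \<rho> u_notin by auto
    then have "insert u (\<rho> - {u}) \<in> X" by (rule insert_u_proper)
    then show ?thesis using True by (simp add: insert_absorb)
  next
    case False
    then have "\<rho> \<subseteq> \<sigma>" using \<rho> by blast
    then show ?thesis using face_subset[OF assms] by blast
  qed
qed

end

lemma facets_and_pure_dim_3:
  assumes X: "simplicial_complex X" "X \<noteq> {}"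
    and in4: "\<And>\<rho>. \<rho> \<in> X \<Longrightarrow> \<exists>\<sigma>\<in>X. card \<sigma> = 4 \<and> \<rho> \<subseteq> \<sigma>"
    and le4: "\<And>\<rho>. \<rho> \<in> X \<Longrightarrow> card \<rho> \<le> 4"
  shows "facets X = {\<sigma>\<in>X. card \<sigma> = 4}" "pure_dim 3 X"
proof -
  have "\<tau> = \<sigma>" if "\<sigma> \<in> X" "card \<sigma> = 4" "\<tau> \<in> X" "\<sigma> \<subseteq> \<tau>" for \<sigma> \<tau>
    using that card_seteq[OF simplicial_complex_finite_face[OF X(1)], of \<tau> \<sigma>] le4[of \<tau>] by simp
  moreover have "card m = 4" if "m \<in> facets X" for m
    using that in4 unfolding facets_def by fastforce
  ultimately show facets: "facets X = {\<sigma>\<in>X. card \<sigma> = 4}" unfolding facets_def by auto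
  obtain \<sigma> where "\<sigma> \<in> X" "card \<sigma> = 4" using X(2) in4 by blast
  then show "pure_dim 3 X" unfolding pure_dim_def facets by auto
qed

text \<open>The inverse of starring u into \<open>link_vertices X {u}\<close>.\<close>

definition unstar :: "'a set set \<Rightarrow> 'a \<Rightarrow> 'a set set" where
  "unstar X u = {\<rho>\<in>X. u \<notin> \<rho>} \<union> {link_vertices X {u}}"

locale unstar_degree_four_vertex = degree_four_vertex +
  assumes link_not_face: "link_vertices X {u} \<notin> X"
begin

abbreviation "Y \<equiv> unstar X u"

lemma mem_unstar: "\<rho> \<in> Y \<longleftrightarrow> (\<rho> \<in> X \<and> u \<notin> \<rho>) \<or> \<rho> = \<sigma>"
  unfolding unstar_def by auto

lemma simplicial_unstar: "simplicial_complex Y"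
  unfolding simplicial_complex_def
proof (intro conjI ballI allI impI)
  show "finite Y" unfolding unstar_def using finite_complex by simp
  fix \<rho> \<tau> assume \<rho>: "\<rho> \<in> Y"
  then show "finite \<rho>" using mem_unstar finite_face finite_\<sigma> by auto
  assume \<tau>: "\<tau> \<subseteq> \<rho>"
  show "\<tau> \<in> Y"
  proof (cases "\<rho> = \<sigma>")
    case True
    show ?thesis
    proof (cases "\<tau> = \<sigma>")
      case False
      then have "\<tau> \<subset> \<sigma>" using \<tau> True by blast
      then have "\<tau> \<in> X" "u \<notin> \<tau>"
        using face_subset[OF insert_u_proper, of \<tau> \<tau>] u_notin by auto
      then show ?thesis using mem_unstar by blast
    qed (simp add: mem_unstar)
  next
    case False
    then have "\<rho> \<in> X" "u \<notin> \<rho>" using \<rho> mem_unstar by auto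
    then have "\<tau> \<in> X" "u \<notin> \<tau>" using face_subset \<tau> by auto
    then show ?thesis using mem_unstar by blast
  qed
qed

lemma facets_unstar: "facets Y = {\<rho>\<in>Y. card \<rho> = 4}" and pure_unstar: "pure_dim 3 Y"
proof -
  have "\<exists>\<tau>\<in>Y. card \<tau> = 4 \<and> \<rho> \<subseteq> \<tau>" if \<rho>: "\<rho> \<in> Y" for \<rho>
  proof (cases "\<rho> = \<sigma>")
    case False
    then have \<rho>X: "\<rho> \<in> X" "u \<notin> \<rho>" using \<rho> mem_unstar by auto
    obtain \<tau> where \<tau>: "\<tau> \<in> X" "card \<tau> = 4" "\<rho> \<subseteq> \<tau>" using face_in_facet[OF \<rho>X(1)] .
    show ?thesis
    proof (cases "u \<in> \<tau>")
      case True
      then have "\<rho> \<subseteq> \<sigma>" using face_through_u[OF \<tau>(1)] \<tau>(3) \<rho>X(2) by auto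
      then show ?thesis using degree mem_unstar by auto
    qed (use \<tau> mem_unstar in auto)
  qed (use degree mem_unstar in auto)
  moreover have "card \<rho> \<le> 4" if "\<rho> \<in> Y" for \<rho> using that mem_unstar card_face_le degree by auto
  moreover have "Y \<noteq> {}" using mem_unstar by auto
  ultimately show "facets Y = {\<rho>\<in>Y. card \<rho> = 4}" "pure_dim 3 Y"
    using facets_and_pure_dim_3[OF simplicial_unstar] by auto
qed

lemma facet_through_u_eq:
  assumes "\<rho> \<in> X" "card \<rho> = 4" "\<tau> \<subseteq> \<rho>" "card \<tau> = 3" "u \<notin> \<tau>" "u \<in> \<rho>"
  shows "\<rho> = insert u \<tau>"
proof -
  have "card (\<rho> - {u}) = 3" using assms(2,6) finite_face[OF assms(1)] by simp
  then have "\<tau> = \<rho> - {u}"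
    using card_seteq[of "\<rho> - {u}" \<tau>] finite_face[OF assms(1)] assms(3-5) by auto
  then show ?thesis using assms(6) by auto
qed

text \<open>Unstarring swaps the facet through a triangle \<tau> of \<sigma> and u for \<sigma> itself.\<close>

lemma card_facets_containing_ridge_unstar:
  assumes \<tau>: "\<tau> \<in> Y" "card \<tau> = 3" shows "card {\<rho> \<in> facets Y. \<tau> \<subseteq> \<rho>} = 2"
proof -
  have \<tau>X: "\<tau> \<in> X" "u \<notin> \<tau>" using \<tau> mem_unstar degree by auto
  let ?F = "{\<rho>\<in>X. card \<rho> = 4 \<and> \<tau> \<subseteq> \<rho>} - {insert u \<tau>}"
  have eq: "{\<rho> \<in> facets Y. \<tau> \<subseteq> \<rho>} = ?F \<union> (if \<tau> \<subseteq> \<sigma> then {\<sigma>} else {})"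
  proof (intro set_eqI iffI)
    fix \<rho> assume "\<rho> \<in> {\<rho> \<in> facets Y. \<tau> \<subseteq> \<rho>}"
    then show "\<rho> \<in> ?F \<union> (if \<tau> \<subseteq> \<sigma> then {\<sigma>} else {})"
      unfolding facets_unstar mem_unstar by auto
  next
    fix \<rho> assume \<rho>: "\<rho> \<in> ?F \<union> (if \<tau> \<subseteq> \<sigma> then {\<sigma>} else {})"
    show "\<rho> \<in> {\<rho> \<in> facets Y. \<tau> \<subseteq> \<rho>}"
    proof (cases "\<rho> \<in> ?F")
      case True
      then have "u \<notin> \<rho>" using facet_through_u_eq[OF _ _ _ \<tau>(2) \<tau>X(2)] by blast
      then show ?thesis using True unfolding facets_unstar mem_unstar by simp
    next
      case False
      then have "\<rho> = \<sigma>" "\<tau> \<subseteq> \<sigma>" using \<rho> by (auto split: if_splits)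
      then show ?thesis using degree unfolding facets_unstar mem_unstar by simp
    qed
  qed
  have "insert u \<tau> \<in> X \<longleftrightarrow> \<tau> \<subseteq> \<sigma>"
    using insert_u_triangle[OF _ \<tau>(2)] face_through_u[of "insert u \<tau>"] \<tau>X(2) by auto
  moreover have "card (insert u \<tau>) = 4" using \<tau>(2) \<tau>X(2) finite_face[OF \<tau>X(1)] by simp
  ultimately have "insert u \<tau> \<in> {\<rho>\<in>X. card \<rho> = 4 \<and> \<tau> \<subseteq> \<rho>} \<longleftrightarrow> \<tau> \<subseteq> \<sigma>" by auto
  then have "card ?F = (if \<tau> \<subseteq> \<sigma> then 1 else 2)"
    using card_facets_containing_ridge[OF \<tau>X(1) \<tau>(2)] finite_complex
      card_Diff_singleton[of "insert u \<tau>" "{\<rho>\<in>X. card \<rho> = 4 \<and> \<tau> \<subseteq> \<rho>}"] by auto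
  moreover have "\<sigma> \<notin> ?F" using link_not_face by blast
  moreover have "finite ?F" using finite_complex by simp
  ultimately show ?thesis unfolding eq by simp
qed

lemma link_vertices_unstar:
  assumes "\<alpha> \<in> X" "u \<notin> \<alpha>" "card \<alpha> \<le> 2"
  shows "link_vertices Y \<alpha> = link_vertices X \<alpha> - {u}"
proof -
  have "insert w \<alpha> \<noteq> \<sigma>" for w
  proof
    assume "insert w \<alpha> = \<sigma>"
    moreover have "card (insert w \<alpha>) \<le> 3"
      using assms(3) finite_face[OF assms(1)] by (simp add: card_insert_if)
    ultimately show False using degree by simp
  qed
  then show ?thesis using assms(2) unfolding link_vertices_def mem_unstar by auto
qed

text \<open>A walk in the link of \<alpha> through u can skip u: the two neighbours of u on the walk lie in
  \<sigma>, which is a face of the unstarred complex.\<close>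

lemma link_connected_unstar:
  assumes \<alpha>: "\<alpha> \<in> Y" "card \<alpha> \<le> 2" shows "connected_complex (link Y \<alpha>)"
  unfolding connected_link_iff[OF simplicial_unstar]
proof (intro ballI)
  have \<alpha>X: "\<alpha> \<in> X" "u \<notin> \<alpha>" using \<alpha> mem_unstar degree by auto
  fix x y assume "x \<in> link_vertices Y \<alpha>" "y \<in> link_vertices Y \<alpha>"
  then have xy: "x \<in> link_vertices X \<alpha>" "x \<noteq> u" "y \<in> link_vertices X \<alpha>" "y \<noteq> u"
    using link_vertices_unstar[OF \<alpha>X \<alpha>(2)] by auto
  show "(x,y) \<in> (link_graph Y \<alpha>)\<^sup>*"
  proof (rule rtrancl_bypass_vertex[where u = u])
    show "(x,y) \<in> (link_graph X \<alpha>)\<^sup>*" using link_graph_connected[OF \<alpha>X(1) \<alpha>(2) xy(1,3)] .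
    show "x \<noteq> u" "y \<noteq> u" using xy by auto
  next
    fix a b assume "(a,b) \<in> link_graph X \<alpha>" "a \<noteq> u" "b \<noteq> u"
    then show "(a,b) \<in> link_graph Y \<alpha>" using \<alpha>X(2) unfolding link_graph_def mem_unstar by auto
  next
    fix a b assume h: "(a,u) \<in> link_graph X \<alpha>" "(u,b) \<in> link_graph X \<alpha>" "a \<noteq> u" "b \<noteq> u" "a \<noteq> b"
    then have f: "insert a (insert u \<alpha>) \<in> X" "insert u (insert b \<alpha>) \<in> X" "a \<notin> \<alpha>" "b \<notin> \<alpha>"
      unfolding link_graph_def by auto
    have "insert a (insert u \<alpha>) - {u} \<subseteq> \<sigma>" "insert u (insert b \<alpha>) - {u} \<subseteq> \<sigma>"
      by (rule face_through_u[OF f(1)], simp, rule face_through_u[OF f(2)], simp)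
    then have "insert a (insert b \<alpha>) \<subseteq> \<sigma>" using h(3,4) \<alpha>X(2) by blast
    moreover have "\<sigma> \<in> Y" using mem_unstar by simp
    ultimately have "insert a (insert b \<alpha>) \<in> Y"
      using simplicial_complex_subset[OF simplicial_unstar] by blast
      then show "(a,b) \<in> link_graph Y \<alpha>" using h(5) f(3,4) unfolding link_graph_def by simp
  qed
qed

lemma normal_pseudomanifold_unstar: "normal_pseudomanifold 3 Y"
  unfolding normal_pseudomanifold_def
proof (intro conjI ballI impI)
  fix \<tau> assume "\<tau> \<in> Y"
  then show "card \<tau> = 3 \<Longrightarrow> card {\<rho> \<in> facets Y. \<tau> \<subseteq> \<rho>} = 2"
    "card \<tau> + 1 \<le> 3 \<Longrightarrow> connected_complex (link Y \<tau>)"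
    using card_facets_containing_ridge_unstar link_connected_unstar by simp_all
qed (use simplicial_unstar pure_unstar in simp_all)

lemma vertices_unstar: "vertices Y = vertices X - {u}"
proof (intro set_eqI iffI)
  fix x assume "x \<in> vertices Y"
  then obtain \<rho> where "\<rho> \<in> Y" "x \<in> \<rho>" unfolding vertices_def by blast
  moreover have "\<sigma> \<subseteq> vertices X" unfolding link_vertices_def vertices_def by blast
  ultimately show "x \<in> vertices X - {u}" using u_notin unfolding mem_unstar vertices_def by blast
next
  fix x assume "x \<in> vertices X - {u}"
  then have "{x} \<in> X" "u \<notin> {x}" using vertex_iff by auto
  then have "{x} \<in> Y" unfolding mem_unstar by blast
  then show "x \<in> vertices Y" unfolding vertices_def by blast
qed

lemma edges_unstar: "edges Y = {e \<in> edges X. u \<notin> e}"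
  unfolding edges_def mem_unstar using degree by auto

lemma card_edges_through_u: "card {e \<in> edges X. u \<in> e} = 4"
  using card_edges_at_vertex degree by simp

lemma card_edges_unstar: "card (edges Y) + 4 = card (edges X)"
proof -
  have "edges X = {e \<in> edges X. u \<notin> e} \<union> {e \<in> edges X. u \<in> e}"
    "{e \<in> edges X. u \<notin> e} \<inter> {e \<in> edges X. u \<in> e} = {}" by blast+
  then have "card (edges X) = card {e \<in> edges X. u \<notin> e} + card {e \<in> edges X. u \<in> e}"
    using finite_edges card_Un_disjoint[of "{e \<in> edges X. u \<notin> e}" "{e \<in> edges X. u \<in> e}"]
    by simp
  then show ?thesis using edges_unstar card_edges_through_u by simp
qed

lemma card_vertices_unstar: "card (vertices Y) + 1 = card (vertices X)"
proof -
  have "u \<in> vertices X" using vertex vertex_iff by simp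
  then have "card (vertices Y) = card (vertices X) - 1" "card (vertices X) > 0"
    using vertices_unstar finite_vertices card_Diff_singleton card_gt_0_iff by auto
  then show ?thesis by simp
qed

lemma edges_meeting_unstar:
  assumes "A \<inter> \<sigma> = {}" "u \<notin> A"
  shows "{e \<in> edges Y. e \<inter> A \<noteq> {}} = {e \<in> edges X. e \<inter> A \<noteq> {}}"
proof -
  have "u \<notin> e" if "e \<in> X" "e \<inter> A \<noteq> {}" for e
  proof
    assume "u \<in> e"
    then have "e \<inter> A \<subseteq> \<sigma> \<inter> A" using face_through_u[OF that(1)] assms(2) by blast
    then show False using that(2) assms(1) by blast
  qed
  then show ?thesis unfolding edges_unstar by (auto simp: edges_def)
qed

lemma card_edges_meeting_insert_u:
  "card {e \<in> edges X. e \<inter> insert u A \<noteq> {}} = card {e \<in> edges Y. e \<inter> A \<noteq> {}} + 4"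
proof -
  have "{e \<in> edges X. e \<inter> insert u A \<noteq> {}} = {e \<in> edges Y. e \<inter> A \<noteq> {}} \<union> {e \<in> edges X. u \<in> e}"
    "{e \<in> edges Y. e \<inter> A \<noteq> {}} \<inter> {e \<in> edges X. u \<in> e} = {}"
    unfolding edges_unstar by blast+
  then show ?thesis
    using card_Un_disjoint[of "{e \<in> edges Y. e \<inter> A \<noteq> {}}" "{e \<in> edges X. u \<in> e}"]
      finite_edges card_edges_through_u unfolding edges_unstar by simp
qed

text \<open>A vertex set of the unstarred complex missing one of its facets either misses \<sigma>, and then
  also a facet of X through u, or else, together with u, misses a facet of X.\<close>

lemma rigid_unstar: "rigid 4 3 Y"
  unfolding rigid_def
proof (intro conjI allI impI)
  have "{} \<in> Y" using empty_face mem_unstar by simp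
  then show "connected_complex Y" using link_connected_unstar[of "{}"] by (simp add: link_empty)
  fix A assume A: "A \<subseteq> vertices Y" and "\<exists>\<rho>\<in>Y. card \<rho> = 3 + 1 \<and> A \<inter> \<rho> = {}"
  then obtain \<rho> where \<rho>: "\<rho> \<in> Y" "card \<rho> = 4" "A \<inter> \<rho> = {}" by auto
  have AX: "A \<subseteq> vertices X" "u \<notin> A" using A vertices_unstar by auto
  show "4 * card A \<le> card {e \<in> edges Y. e \<inter> A \<noteq> {}}"
  proof (cases "A \<inter> \<sigma> = {}")
    case True
    have "\<sigma> \<noteq> {}" using degree by auto
    then obtain z where z: "z \<in> \<sigma>" by blast
    then have "\<sigma> - {z} \<subset> \<sigma>" by blast
    then have "insert u (\<sigma> - {z}) \<in> X" by (rule insert_u_proper)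
    moreover have "card (insert u (\<sigma> - {z})) = 4" using z degree u_notin finite_\<sigma> by simp
    moreover have "A \<inter> insert u (\<sigma> - {z}) = {}" using True AX(2) by blast
    ultimately show ?thesis using rigidity[OF AX(1)] edges_meeting_unstar[OF True AX(2)] by simp
  next
    case False
    then have \<rho>X: "\<rho> \<in> X" "u \<notin> \<rho>" using \<rho> mem_unstar by auto
    have "insert u A \<subseteq> vertices X" using AX(1) vertex vertex_iff by simp
    moreover have "insert u A \<inter> \<rho> = {}" using \<rho>(3) \<rho>X(2) by simp
    ultimately have "4 * card (insert u A) \<le> card {e \<in> edges X. e \<inter> insert u A \<noteq> {}}"
      using rigidity[OF _ \<rho>X(1) \<rho>(2)] by blast
    moreover have "card (insert u A) = Suc (card A)"
      using AX finite_subset[OF AX(1) finite_vertices] by simp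
    ultimately show ?thesis using card_edges_meeting_insert_u by simp
  qed
qed

lemma minimally_rigid_unstar: "minimally_rigid 4 3 Y"
proof -
  have "card (edges Y) + 10 = 4 * card (vertices Y)"
    using card_edges_unstar card_vertices_unstar card_edges by linarith
  moreover have "((3 + 1::nat) choose 2) = 6" by (simp add: numeral_eq_Suc)
  ultimately show ?thesis unfolding minimally_rigid_def using rigid_unstar by simp
qed

lemma star_vertex_unstar: "star_vertex Y \<sigma> u = X"
proof -
  have "Y - {\<sigma>} = {\<rho>\<in>X. u \<notin> \<rho>}" using link_not_face unfolding unstar_def by blast
  then show ?thesis unfolding star_vertex_def faces_through_u[symmetric] by blast
qed

lemma facet_unstar: "\<sigma> \<in> facets Y"
  using facets_unstar degree mem_unstar by simp

lemma u_notin_vertices_unstar: "u \<notin> vertices Y"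
  using vertices_unstar by blast

end

theorem lemma7p6:
  fixes X :: "'a set set"
  assumes "normal_pseudomanifold 3 X"
    and "minimally_rigid 4 3 X"
  shows "X \<in> stacked_sphere 3"
  using assms
proof (induction "card (vertices X)" arbitrary: X rule: less_induct)
  case less
  interpret min_rigid_pseudomanifold3 X
    using less.prems by unfold_locales
  obtain u where "{u} \<in> X" "card (link_vertices X {u}) = 4" by (rule degree_four_vertex)
  then interpret degree_four_vertex X u by unfold_locales
  show ?case
  proof (cases "\<sigma> \<in> X")
    case True
    have "standard_sphere (insert u \<sigma>) \<in> stacked_sphere 3"
      using degree u_notin finite_\<sigma> by (intro stacked_sphere.base) simp_all
    then show ?thesis using eq_standard_sphere_if_link_face[OF True] by simp
  next
    case False
    then interpret unstar_degree_four_vertex X u by unfold_locales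
    have "Y \<in> stacked_sphere 3"
      using less.hyps card_vertices_unstar normal_pseudomanifold_unstar minimally_rigid_unstar
      by simp
    then have "star_vertex Y \<sigma> u \<in> stacked_sphere 3"
      using facet_unstar degree u_notin_vertices_unstar by (intro stacked_sphere.star) simp_all
    then show ?thesis using star_vertex_unstar by simp
  qed
qed

end
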